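(* If $g\ge1$ and $n\ge1$, the map $\mathcal{K}\mapsto\mathcal{Z}_{\mathcal{K}}$ is a bijection from the set of simplicial complexes on $[n]$ to the set of extremal assignments on $\mathbb{G}_{g,n}$ supported on rational tails. If $g=0$ and $n\ge3$, the map $\mathcal{K}\mapsto\mathcal{Z}_{\mathcal{K}}$ is a bijection from the set of at least triparted simplicial complexes on $[n]$ to the set of extremal assignments on $\mathbb{G}_{0,n}$ supported on rational tails.
   Context: A simplicial complex on $[n]$ is a downward-closed family of subsets containing all singletons; it is at least triparted if every partition of $[n]$ with all parts in $\mathcal{K}$ has at least three parts. $\mathbb{G}_{g,n}$ is the set of isomorphism classes of dual graphs of stable $n$-pointed genus $g$ curves (connected graphs with vertex genera and $n$ labelled legs, total genus $g$, all vertices stable). A weighted edge contraction $\pi:G'\to G$ contracts a set of edges; $\pi^{-1}(v)$ is the subgraph contracted to $v$. An extremal assignment on $\mathbb{G}_{g,n}$ assigns to each $G$ a vertex-induced subgraph $\mathcal{Z}(G)$ with (Z1) $\mathcal{Z}(G)\ne G$ and (Z2) for every weighted edge contraction $\pi:G'\to G$ and $v\in V(G)$: $v\in\mathcal{Z}(G)$ iff $\pi^{-1}(v)\subseteq\mathcal{Z}(G')$. A rational tail of $G$ is a connected genus $0$ vertex-induced subgraph joined to its complement by exactly one edge; $\operatorname{Marks}(T)$ is the set of leg labels on $T$. $\mathcal{Z}$ is supported on rational tails if each $\mathcal{Z}(G)$ is a disjoint union of rational tails. $\mathcal{Z}_{\mathcal{K}}$ assigns to $G$ the smallest vertex-induced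 subgraph of $G$ containing all rational tails $T$ with $\operatorname{Marks}(T)\in\mathcal{K}$. *)

theory Defs
  imports Main
begin

definition simplicial_complex :: "nat \<Rightarrow> nat set set \<Rightarrow> bool" where
  "simplicial_complex n K \<longleftrightarrow>
     K \<subseteq> Pow {1..n} \<and>
     (\<forall>A\<in>K. \<forall>B. B \<subseteq> A \<longrightarrow> B \<in> K) \<and>
     (\<forall>i\<in>{1..n}. {i} \<in> K)"

definition set_partition :: "nat set \<Rightarrow> nat set set \<Rightarrow> bool" where
  "set_partition X P \<longleftrightarrow>
     (\<forall>A\<in>P. A \<noteq> {}) \<and> \<Union>P = X \<and>
     (\<forall>A\<in>P. \<forall>B\<in>P. A \<noteq> B \<longrightarrow> A \<inter> B = {})"

definition at_least_triparted :: "nat \<Rightarrow> nat set set \<Rightarrow> bool" where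
  "at_least_triparted n K \<longleftrightarrow>
     (\<forall>P. set_partition {1..n} P \<and> P \<subseteq> K \<longrightarrow> card P \<ge> 3)"

text \<open>A graph: vertex set, edge set, endpoints of each edge (a set of one vertex for
  a loop, of two vertices otherwise), vertex genera, and the vertex carrying leg i.\<close>

record sgraph =
  verts :: "nat set"
  edges :: "nat set"
  ends  :: "nat \<Rightarrow> nat set"
  gen   :: "nat \<Rightarrow> nat"
  leg   :: "nat \<Rightarrow> nat"

definition adj :: "sgraph \<Rightarrow> nat set \<Rightarrow> nat set \<Rightarrow> (nat \<times> nat) set" where
  "adj G W F = {(u, w). u \<in> W \<and> w \<in> W \<and> (\<exists>e\<in>F. ends G e = {u, w})}"

definition connected_sub :: "sgraph \<Rightarrow> nat set \<Rightarrow> nat set \<Rightarrow> bool" where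
  "connected_sub G W F \<longleftrightarrow> (\<forall>u\<in>W. \<forall>w\<in>W. (u, w) \<in> (adj G W F)\<^sup>*)"

text \<open>Genus of a (connected) subgraph: sum of vertex genera plus first Betti number.\<close>
definition sub_genus :: "sgraph \<Rightarrow> nat set \<Rightarrow> nat set \<Rightarrow> int" where
  "sub_genus G W F = (\<Sum>v\<in>W. int (gen G v)) + int (card F) - int (card W) + 1"

definition valence :: "nat \<Rightarrow> sgraph \<Rightarrow> nat \<Rightarrow> nat" where
  "valence n G v =
     (\<Sum>e\<in>edges G. if ends G e = {v} then 2 else if v \<in> ends G e then 1 else 0)
     + card {i\<in>{1..n}. leg G i = v}"

text \<open>Dual graph of a stable n-pointed genus g curve (a concrete representative).\<close>
definition stable_graph :: "nat \<Rightarrow> nat \<Rightarrow> sgraph \<Rightarrow> bool" where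
  "stable_graph g n G \<longleftrightarrow>
     finite (verts G) \<and> verts G \<noteq> {} \<and> finite (edges G) \<and>
     (\<forall>e\<in>edges G. ends G e \<subseteq> verts G \<and> (card (ends G e) = 1 \<or> card (ends G e) = 2)) \<and>
     (\<forall>i\<in>{1..n}. leg G i \<in> verts G) \<and>
     connected_sub G (verts G) (edges G) \<and>
     sub_genus G (verts G) (edges G) = int g \<and>
     (\<forall>v\<in>verts G. 2 * int (gen G v) - 2 + int (valence n G v) > 0)"

text \<open>Weighted edge contraction pi: G' -> G contracting the edge set S:
  f is the vertex map, h the bijection between the remaining edges.\<close>
definition fiber :: "sgraph \<Rightarrow> (nat \<Rightarrow> nat) \<Rightarrow> nat \<Rightarrow> nat set" where
  "fiber G' f v = {u\<in>verts G'. f u = v}"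

definition contraction ::
  "nat \<Rightarrow> sgraph \<Rightarrow> sgraph \<Rightarrow> nat set \<Rightarrow> (nat \<Rightarrow> nat) \<Rightarrow> (nat \<Rightarrow> nat) \<Rightarrow> bool" where
  "contraction n G' G S f h \<longleftrightarrow>
     S \<subseteq> edges G' \<and>
     f ` verts G' = verts G \<and>
     bij_betw h (edges G' - S) (edges G) \<and>
     (\<forall>e\<in>edges G' - S. ends G (h e) = f ` ends G' e) \<and>
     (\<forall>e\<in>S. card (f ` ends G' e) = 1) \<and>
     (\<forall>i\<in>{1..n}. leg G i = f (leg G' i)) \<and>
     (\<forall>v\<in>verts G.
        connected_sub G' (fiber G' f v) {e\<in>S. ends G' e \<subseteq> fiber G' f v} \<and>
        int (gen G v) = sub_genus G' (fiber G' f v) {e\<in>S. ends G' e \<subseteq> fiber G' f v})"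

text \<open>An assignment gives a vertex set (the vertex-induced subgraph Z(G)); by convention
  it is empty on objects that are not stable graphs of type (g,n).
  Isomorphisms are contractions of the empty edge set, so (Z2) includes isomorphism
  invariance, i.e. Z is well defined on isomorphism classes.\<close>
definition extremal_assignment :: "nat \<Rightarrow> nat \<Rightarrow> (sgraph \<Rightarrow> nat set) \<Rightarrow> bool" where
  "extremal_assignment g n Z \<longleftrightarrow>
     (\<forall>G. \<not> stable_graph g n G \<longrightarrow> Z G = {}) \<and>
     (\<forall>G. stable_graph g n G \<longrightarrow> Z G \<subseteq> verts G \<and> Z G \<noteq> verts G) \<and>
     (\<forall>G' G S f h. stable_graph g n G' \<and> stable_graph g n G \<and> contraction n G' G S f h \<longrightarrow>
        (\<forall>v\<in>verts G. v \<in> Z G \<longleftrightarrow> fiber G' f v \<subseteq> Z G'))"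

definition inner_edges :: "sgraph \<Rightarrow> nat set \<Rightarrow> nat set" where
  "inner_edges G T = {e\<in>edges G. ends G e \<subseteq> T}"

definition rational_tail :: "sgraph \<Rightarrow> nat set \<Rightarrow> bool" where
  "rational_tail G T \<longleftrightarrow>
     T \<subseteq> verts G \<and> T \<noteq> {} \<and>
     connected_sub G T (inner_edges G T) \<and>
     sub_genus G T (inner_edges G T) = 0 \<and>
     card {e\<in>edges G. ends G e \<inter> T \<noteq> {} \<and> \<not> ends G e \<subseteq> T} = 1"

definition marks :: "nat \<Rightarrow> sgraph \<Rightarrow> nat set \<Rightarrow> nat set" where
  "marks n G T = {i\<in>{1..n}. leg G i \<in> T}"

definition supported_on_rational_tails :: "nat \<Rightarrow> nat \<Rightarrow> (sgraph \<Rightarrow> nat set) \<Rightarrow> bool" where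
  "supported_on_rational_tails g n Z \<longleftrightarrow>
     (\<forall>G. stable_graph g n G \<longrightarrow>
        (\<exists>\<T>. (\<forall>T\<in>\<T>. rational_tail G T) \<and>
             (\<forall>T1\<in>\<T>. \<forall>T2\<in>\<T>. T1 \<noteq> T2 \<longrightarrow>
                 T1 \<inter> T2 = {} \<and> (\<forall>e\<in>edges G. \<not> (ends G e \<inter> T1 \<noteq> {} \<and> ends G e \<inter> T2 \<noteq> {}))) \<and>
             \<Union>\<T> = Z G))"

definition Z_of :: "nat \<Rightarrow> nat \<Rightarrow> nat set set \<Rightarrow> sgraph \<Rightarrow> nat set" where
  "Z_of g n K G = (if stable_graph g n G
     then \<Union>{T. rational_tail G T \<and> marks n G T \<in> K} else {})"

end

theory Submission
  imports Defs
begin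

text \<open>A rational tail T of a stable graph is a genus-0 tree hanging off the rest by one edge;
  stability puts at least two legs on it, and contracting every other edge maps the graph onto
  the one-edge graph whose genus-0 vertex carries the legs A = Marks(T). By (Z2), an extremal
  assignment contains T exactly when it contains that vertex, so an assignment supported on
  rational tails is determined by the set K_Z of such A. Three-vertex chains make K_Z downward
  closed, and in genus 0 the two vertices of a one-edge graph are both tails, which makes K_Z at
  least triparted.

  Conversely, for such a complex K two rational tails with marks in K never cover the graph (by
  the genus when g \<ge> 1, by tripartedness when g = 0), so the maximal ones are disjoint and
  non-adjacent; this gives (Z1) and the support condition. Preimages of tails under a
  contraction are tails with the same marks, and a maximal tail containing a fiber is either a
  union of fibers or, if its cut edge is contracted, contains a smaller tail around the fiber
  that is one. This gives (Z2).\<close>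

section \<open>Connectivity\<close>

lemma adj_iff: "(u, w) \<in> adj G W F \<longleftrightarrow> u \<in> W \<and> w \<in> W \<and> (\<exists>e\<in>F. ends G e = {u, w})"
  unfolding adj_def by auto

lemma adj_sym: "(u, w) \<in> adj G W F \<Longrightarrow> (w, u) \<in> adj G W F"
  unfolding adj_iff by (auto simp: insert_commute)

lemma rtrancl_adj_sym: "(u, w) \<in> (adj G W F)\<^sup>* \<Longrightarrow> (w, u) \<in> (adj G W F)\<^sup>*"
  by (induction rule: rtrancl_induct) (auto intro: converse_rtrancl_into_rtrancl adj_sym)

lemma rtrancl_adj_mono:
  assumes "W \<subseteq> W'" "F \<subseteq> F'" "(u, w) \<in> (adj G W F)\<^sup>*"
  shows "(u, w) \<in> (adj G W' F')\<^sup>*"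
proof -
  have "adj G W F \<subseteq> adj G W' F'" using assms(1,2) unfolding adj_def by blast
  then show ?thesis using rtrancl_mono assms(3) by blast
qed

lemma connected_sub_mono: "connected_sub G W F \<Longrightarrow> F \<subseteq> F' \<Longrightarrow> connected_sub G W F'"
  unfolding connected_sub_def using rtrancl_adj_mono by blast

lemma connected_sub_singleton: "connected_sub G {x} F"
  unfolding connected_sub_def by simp

lemma connected_sub_edge:
  assumes "e \<in> F" "ends G e = {x, y}"
  shows "connected_sub G {x, y} F"
proof -
  have "(x, y) \<in> adj G {x, y} F" unfolding adj_iff using assms by blast
  then show ?thesis unfolding connected_sub_def using adj_sym by blast
qed

lemma connected_sub_path3:
  assumes "e \<in> F" "ends G e = {x, y}" "e' \<in> F" "ends G e' = {y, z}"
  shows "connected_sub G {x, y, z} F"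
proof -
  have xy: "(x, y) \<in> adj G {x, y, z} F" and yz: "(y, z) \<in> adj G {x, y, z} F"
    unfolding adj_iff using assms by blast+
  have "(x, z) \<in> (adj G {x, y, z} F)\<^sup>*" using xy yz by (meson r_into_rtrancl rtrancl_into_rtrancl)
  then show ?thesis
    unfolding connected_sub_def using xy yz adj_sym rtrancl_adj_sym by blast
qed

lemma rtrancl_adj_crossing_edge:
  assumes "(x, y) \<in> (adj G W F)\<^sup>*" "x \<in> X" "y \<notin> X"
  shows "\<exists>e\<in>F. \<exists>p q. ends G e = {p, q} \<and> p \<in> W \<and> p \<in> X \<and> q \<in> W \<and> q \<notin> X"
  using assms
proof (induction rule: rtrancl_induct)
  case (step y z)
  then show ?case unfolding adj_iff by (cases "y \<in> X") blast+
qed simp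

lemma connected_sub_crossing_edge:
  assumes "connected_sub G W F" "x \<in> W" "x \<in> X" "y \<in> W" "y \<notin> X"
  shows "\<exists>e\<in>F. \<exists>p q. ends G e = {p, q} \<and> p \<in> W \<and> p \<in> X \<and> q \<in> W \<and> q \<notin> X"
  using assms rtrancl_adj_crossing_edge unfolding connected_sub_def by metis

text \<open>Along a walk starting in A, each vertex of A is reachable inside A, and while the walk
  is outside A it has left through a0, which is then reachable inside A.\<close>
lemma connected_sub_single_exit:
  assumes conn: "connected_sub G W F" and AW: "A \<subseteq> W" and a0: "a0 \<in> A"
    and exit: "\<forall>e\<in>F. \<forall>p q. ends G e = {p, q} \<and> p \<in> A \<and> q \<in> W - A \<longrightarrow> p = a0"
  shows "connected_sub G A {e\<in>F. ends G e \<subseteq> A}"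
proof -
  let ?R = "adj G A {e\<in>F. ends G e \<subseteq> A}"
  have walk: "(y \<in> A \<longrightarrow> (x, y) \<in> ?R\<^sup>*) \<and> (y \<notin> A \<longrightarrow> (x, a0) \<in> ?R\<^sup>*)"
    if x: "x \<in> A" and p: "(x, y) \<in> (adj G W F)\<^sup>*" for x y
    using p
  proof (induction rule: rtrancl_induct)
    case base then show ?case using x by simp
  next
    case (step y z)
    obtain e where e: "e \<in> F" "ends G e = {y, z}" and yz: "y \<in> W" "z \<in> W"
      using step(2) unfolding adj_iff by blast
    have zy: "ends G e = {z, y}" using e by (simp add: insert_commute)
    consider "y \<in> A" "z \<in> A" | "y \<in> A" "z \<notin> A" | "y \<notin> A" "z \<in> A" | "y \<notin> A" "z \<notin> A"
      by blast
    then show ?case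
    proof cases
      case 1
      then have "(y, z) \<in> ?R" using e unfolding adj_iff by auto
      then show ?thesis using step(3) 1 by (meson rtrancl_into_rtrancl)
    next
      case 2
      then show ?thesis using step(3) exit e yz by blast
    next
      case 3
      then show ?thesis using step(3) exit e(1) zy yz by blast
    qed (use step(3) in blast)
  qed
  show ?thesis
    using walk conn AW unfolding connected_sub_def by blast
qed

definition vertex_component :: "sgraph \<Rightarrow> nat set \<Rightarrow> nat \<Rightarrow> nat set" where
  "vertex_component G W u = {x\<in>W. (u, x) \<in> (adj G W (inner_edges G W))\<^sup>*}"

lemma vertex_component_subset: "vertex_component G W u \<subseteq> W"
  unfolding vertex_component_def by blast

lemma vertex_component_self: "u \<in> W \<Longrightarrow> u \<in> vertex_component G W u"
  unfolding vertex_component_def by simp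

lemma vertex_component_closed:
  assumes "p \<in> vertex_component G W u" "q \<in> W" "e \<in> edges G" "ends G e = {p, q}"
  shows "q \<in> vertex_component G W u"
proof -
  have "p \<in> W" using assms(1) vertex_component_subset by blast
  then have "(p, q) \<in> adj G W (inner_edges G W)"
    using assms unfolding adj_iff inner_edges_def by auto
  then show ?thesis using assms(1,2) unfolding vertex_component_def by auto
qed

lemma connected_sub_subset_vertex_component:
  assumes conn: "connected_sub G X F" and XW: "X \<subseteq> W" and FW: "F \<subseteq> inner_edges G W"
    and x: "x \<in> X" "x \<in> vertex_component G W u"
  shows "X \<subseteq> vertex_component G W u"
proof
  fix y assume "y \<in> X"
  then have "(x, y) \<in> (adj G W (inner_edges G W))\<^sup>*"
    using conn x rtrancl_adj_mono[OF XW FW] unfolding connected_sub_def by blast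
  then show "y \<in> vertex_component G W u"
    using x(2) \<open>y \<in> X\<close> XW unfolding vertex_component_def by (auto intro: rtrancl_trans)
qed

lemma connected_vertex_component:
  "connected_sub G (vertex_component G W u) (inner_edges G (vertex_component G W u))"
proof -
  let ?C = "vertex_component G W u"
  let ?R = "adj G ?C (inner_edges G ?C)"
  have from_u: "(u, z) \<in> ?R\<^sup>*" if "z \<in> ?C" for z
  proof -
    have "(u, z) \<in> (adj G W (inner_edges G W))\<^sup>*" using that unfolding vertex_component_def by simp
    then show ?thesis
    proof (induction rule: rtrancl_induct)
      case (step y z)
      obtain e where e: "e \<in> inner_edges G W" "ends G e = {y, z}" and "y \<in> W" "z \<in> W"
        using step(2) unfolding adj_iff by blast
      have "y \<in> ?C" "z \<in> ?C"
        using step(1,2) \<open>y \<in> W\<close> \<open>z \<in> W\<close> unfolding vertex_component_def by auto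
      then have "(y, z) \<in> ?R" using e unfolding adj_iff inner_edges_def by auto
      then show ?case using step(3) by (meson rtrancl_into_rtrancl)
    qed simp
  qed
  show ?thesis
    unfolding connected_sub_def using from_u rtrancl_adj_sym by (blast intro: rtrancl_trans)
qed

section \<open>Genus of subgraphs\<close>

text \<open>A spanning forest of W rooted in R has one edge leaving R for every vertex outside R.\<close>
lemma card_diff_le_card_edges_leaving:
  assumes fW: "finite W" and fF: "finite F" and "R \<subseteq> W"
    and reach: "\<forall>w\<in>W. \<exists>r\<in>R. (r, w) \<in> (adj G W F)\<^sup>*"
  shows "card (W - R) \<le> card {e\<in>F. \<not> ends G e \<subseteq> R}"
  using assms(3,4)
proof (induction "card (W - R)" arbitrary: R)
  case 0
  then show ?case by linarith
next
  case (Suc k)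
  from Suc.hyps(2) have card_WR: "card (W - R) = Suc k" ..
  then have "W - R \<noteq> {}" by (metis card.empty Zero_not_Suc)
  then obtain w where w: "w \<in> W - R" by blast
  obtain r where "r \<in> R" "(r, w) \<in> (adj G W F)\<^sup>*" using Suc.prems(2) w by blast
  then obtain e p q where e: "e \<in> F" "ends G e = {p, q}" "p \<in> R" "q \<in> W" "q \<notin> R"
    using rtrancl_adj_crossing_edge[of r w G W F R] w by blast
  have "W - insert q R = (W - R) - {q}" "q \<in> W - R" using e(4,5) by blast+
  then have k: "k = card (W - insert q R)" using card_WR fW by (simp add: card_Diff_singleton)
  have "insert q R \<subseteq> W" "\<forall>w\<in>W. \<exists>r\<in>insert q R. (r, w) \<in> (adj G W F)\<^sup>*"
    using Suc.prems e(4) by blast+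
  then have "card (W - insert q R) \<le> card {e\<in>F. \<not> ends G e \<subseteq> insert q R}"
    by (rule Suc.hyps(1)[OF k])
  also have "\<dots> \<le> card ({e\<in>F. \<not> ends G e \<subseteq> R} - {e})"
    using fF e(2,3) by (intro card_mono) auto
  also have "\<dots> = card {e\<in>F. \<not> ends G e \<subseteq> R} - 1"
    using e fF by (simp add: card_Diff_singleton)
  finally have "k \<le> card {e\<in>F. \<not> ends G e \<subseteq> R} - 1"
    using k by simp
  moreover have "card {e\<in>F. \<not> ends G e \<subseteq> R} > 0"
    using e fF by (auto simp: card_gt_0_iff)
  ultimately show ?case using card_WR by linarith
qed

lemma connected_sub_card_le:
  assumes "connected_sub G W F" "finite W" "W \<noteq> {}" "finite F"
  shows "card W \<le> card F + 1"
proof -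
  obtain r where r: "r \<in> W" using assms(3) by blast
  have "card (W - {r}) \<le> card {e\<in>F. \<not> ends G e \<subseteq> {r}}"
    using card_diff_le_card_edges_leaving[OF assms(2,4), of "{r}"] r assms(1)
    unfolding connected_sub_def by blast
  also have "\<dots> \<le> card F" using assms(4) by (intro card_mono) auto
  finally show ?thesis using r assms(2) by (simp add: card_Diff_singleton)
qed

lemma sub_genus_nonneg:
  assumes "connected_sub G W F" "finite W" "W \<noteq> {}" "finite F"
  shows "sub_genus G W F \<ge> 0"
  using connected_sub_card_le[OF assms] sum_nonneg[of W "\<lambda>v. int (gen G v)"]
  unfolding sub_genus_def by simp

lemma sub_genus_induced_le:
  assumes conn: "connected_sub G W F" and fW: "finite W" and fF: "finite F"
    and sub: "W' \<subseteq> W" and ne: "W' \<noteq> {}"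
  shows "sub_genus G W' {e\<in>F. ends G e \<subseteq> W'} \<le> sub_genus G W F"
proof -
  have "\<forall>w\<in>W. \<exists>r\<in>W'. (r, w) \<in> (adj G W F)\<^sup>*"
    using conn ne sub unfolding connected_sub_def by blast
  then have leaving: "card (W - W') \<le> card {e\<in>F. \<not> ends G e \<subseteq> W'}"
    using card_diff_le_card_edges_leaving[OF fW fF sub] by blast
  have "F = {e\<in>F. ends G e \<subseteq> W'} \<union> {e\<in>F. \<not> ends G e \<subseteq> W'}" by blast
  then have "card F = card {e\<in>F. ends G e \<subseteq> W'} + card {e\<in>F. \<not> ends G e \<subseteq> W'}"
    using fF card_Un_disjoint[of "{e\<in>F. ends G e \<subseteq> W'}" "{e\<in>F. \<not> ends G e \<subseteq> W'}"] by auto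
  moreover have "card W = card W' + card (W - W')"
    using fW sub card_Diff_subset[of W' W] card_mono[OF fW sub] finite_subset[OF sub fW] by simp
  moreover have "(\<Sum>v\<in>W. int (gen G v)) = (\<Sum>v\<in>W'. int (gen G v)) + (\<Sum>v\<in>W-W'. int (gen G v))"
    using fW sub by (metis add.commute sum.subset_diff)
  moreover have "(\<Sum>v\<in>W-W'. int (gen G v)) \<ge> 0" by (simp add: sum_nonneg)
  ultimately show ?thesis unfolding sub_genus_def using leaving by linarith
qed

lemma sub_genus_Un:
  assumes "finite A" "finite B" "A \<inter> B = {}" "finite FA" "finite FB" "finite X"
    "FA \<inter> FB = {}" "FA \<inter> X = {}" "FB \<inter> X = {}"
  shows "sub_genus G (A \<union> B) (FA \<union> FB \<union> X) = sub_genus G A FA + sub_genus G B FB + int (card X) - 1"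
proof -
  have "card (FA \<union> FB \<union> X) = card FA + card FB + card X"
    using assms by (simp add: card_Un_disjoint Int_Un_distrib2)
  moreover have "card (A \<union> B) = card A + card B" using assms by (simp add: card_Un_disjoint)
  moreover have "(\<Sum>v\<in>A \<union> B. int (gen G v)) = (\<Sum>v\<in>A. int (gen G v)) + (\<Sum>v\<in>B. int (gen G v))"
    using assms by (simp add: sum.union_disjoint)
  ultimately show ?thesis unfolding sub_genus_def by simp
qed

section \<open>Rational tails\<close>

lemma stable_graph_finite_verts: "stable_graph g n G \<Longrightarrow> finite (verts G)"
  unfolding stable_graph_def by simp

lemma stable_graph_finite_edges: "stable_graph g n G \<Longrightarrow> finite (edges G)"
  unfolding stable_graph_def by simp

lemma stable_graph_verts_nonempty: "stable_graph g n G \<Longrightarrow> verts G \<noteq> {}"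
  unfolding stable_graph_def by simp

lemma stable_graph_connected: "stable_graph g n G \<Longrightarrow> connected_sub G (verts G) (edges G)"
  unfolding stable_graph_def by simp

lemma stable_graph_genus: "stable_graph g n G \<Longrightarrow> sub_genus G (verts G) (edges G) = int g"
  unfolding stable_graph_def by simp

lemma stable_graph_leg: "stable_graph g n G \<Longrightarrow> i \<in> {1..n} \<Longrightarrow> leg G i \<in> verts G"
  unfolding stable_graph_def by simp

lemma stable_graph_stability:
  "stable_graph g n G \<Longrightarrow> v \<in> verts G \<Longrightarrow> 2 * int (gen G v) - 2 + int (valence n G v) > 0"
  unfolding stable_graph_def by blast

lemma stable_graph_ends_subset: "stable_graph g n G \<Longrightarrow> e \<in> edges G \<Longrightarrow> ends G e \<subseteq> verts G"
  unfolding stable_graph_def by simp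

lemma stable_graph_card_ends:
  "stable_graph g n G \<Longrightarrow> e \<in> edges G \<Longrightarrow> card (ends G e) = 1 \<or> card (ends G e) = 2"
  unfolding stable_graph_def by simp

lemma stable_graph_ends_nonempty: "stable_graph g n G \<Longrightarrow> e \<in> edges G \<Longrightarrow> ends G e \<noteq> {}"
  using stable_graph_card_ends by fastforce

lemma stable_graph_ends_finite: "stable_graph g n G \<Longrightarrow> e \<in> edges G \<Longrightarrow> finite (ends G e)"
  using stable_graph_card_ends by (metis card.infinite zero_neq_numeral zero_neq_one)

lemma stable_graph_ends_eq:
  assumes "stable_graph g n G" "e \<in> edges G" "a \<in> ends G e" "b \<in> ends G e" "a \<noteq> b"
  shows "ends G e = {a, b}"
proof -
  have "{a, b} \<subseteq> ends G e" "card (ends G e) \<le> card {a, b}"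
    using stable_graph_card_ends[OF assms(1,2)] assms(3-5) by auto
  then show ?thesis using card_seteq[OF stable_graph_ends_finite[OF assms(1,2)]] by blast
qed

lemma finite_inner_edges: "stable_graph g n G \<Longrightarrow> finite (inner_edges G T)"
  unfolding inner_edges_def using stable_graph_finite_edges by simp

definition cut_edges :: "sgraph \<Rightarrow> nat set \<Rightarrow> nat set" where
  "cut_edges G T = {e\<in>edges G. ends G e \<inter> T \<noteq> {} \<and> \<not> ends G e \<subseteq> T}"

definition edges_between :: "sgraph \<Rightarrow> nat set \<Rightarrow> nat set \<Rightarrow> nat set" where
  "edges_between G A B = {e\<in>edges G. ends G e \<inter> A \<noteq> {} \<and> ends G e \<inter> B \<noteq> {}}"

lemma finite_cut_edges: "stable_graph g n G \<Longrightarrow> finite (cut_edges G T)"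
  unfolding cut_edges_def using stable_graph_finite_edges by simp

lemma rational_tail_iff:
  "rational_tail G T \<longleftrightarrow> T \<subseteq> verts G \<and> T \<noteq> {} \<and> connected_sub G T (inner_edges G T)
     \<and> sub_genus G T (inner_edges G T) = 0 \<and> card (cut_edges G T) = 1"
  unfolding rational_tail_def cut_edges_def by simp

lemma rational_tail_subset: "rational_tail G T \<Longrightarrow> T \<subseteq> verts G"
  using rational_tail_iff by blast

lemma rational_tail_connected: "rational_tail G T \<Longrightarrow> connected_sub G T (inner_edges G T)"
  using rational_tail_iff by blast

lemma rational_tail_genus: "rational_tail G T \<Longrightarrow> sub_genus G T (inner_edges G T) = 0"
  using rational_tail_iff by blast

lemma cut_edges_singletonD:
  "cut_edges G T = {e0} \<Longrightarrow> e \<in> edges G \<Longrightarrow> ends G e \<inter> T \<noteq> {} \<Longrightarrow> \<not> ends G e \<subseteq> T \<Longrightarrow> e = e0"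
  unfolding cut_edges_def by blast

lemma rational_tail_cut_edge:
  assumes st: "stable_graph g n G" and T: "rational_tail G T"
  obtains e0 a b where "cut_edges G T = {e0}" "e0 \<in> edges G" "ends G e0 = {a, b}"
    "a \<in> T" "b \<in> verts G" "b \<notin> T"
proof -
  obtain e0 where e0: "cut_edges G T = {e0}"
    using T card_1_singletonE unfolding rational_tail_iff by metis
  then have e: "e0 \<in> edges G" "ends G e0 \<inter> T \<noteq> {}" "\<not> ends G e0 \<subseteq> T"
    unfolding cut_edges_def by auto
  then obtain a b where "a \<in> ends G e0" "a \<in> T" "b \<in> ends G e0" "b \<notin> T" by blast
  moreover from this have "ends G e0 = {a, b}" using stable_graph_ends_eq[OF st e(1)] by metis
  ultimately show ?thesis
    using that e0 e(1) stable_graph_ends_subset[OF st e(1)] by blast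
qed

lemma rational_tail_complement_connected:
  assumes st: "stable_graph g n G" and T: "rational_tail G T"
  shows "connected_sub G (verts G - T) (inner_edges G (verts G - T))"
proof -
  obtain e0 a b where c: "cut_edges G T = {e0}" "ends G e0 = {a, b}" "a \<in> T" "b \<in> verts G" "b \<notin> T"
    using rational_tail_cut_edge[OF st T] by metis
  have "\<forall>e\<in>edges G. \<forall>p q. ends G e = {p, q} \<and> p \<in> verts G - T \<and> q \<in> verts G - (verts G - T)
      \<longrightarrow> p = b"
  proof (intro ballI allI impI)
    fix e p q
    assume e: "e \<in> edges G" and pq: "ends G e = {p, q} \<and> p \<in> verts G - T \<and> q \<in> verts G - (verts G - T)"
    then have "e = e0" using cut_edges_singletonD[OF c(1) e] by auto
    then show "p = b" using pq c by (metis DiffD2 doubleton_eq_iff)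
  qed
  then have "connected_sub G (verts G - T) {e\<in>edges G. ends G e \<subseteq> verts G - T}"
    using connected_sub_single_exit[OF stable_graph_connected[OF st], of "verts G - T" b] c(4,5)
    by blast
  then show ?thesis unfolding inner_edges_def .
qed

lemma sub_genus_complement:
  assumes st: "stable_graph g n G" and T: "T \<subseteq> verts G"
  shows "int g = sub_genus G T (inner_edges G T) + sub_genus G (verts G - T) (inner_edges G (verts G - T))
     + int (card (cut_edges G T)) - 1"
proof -
  have "edges G = inner_edges G T \<union> inner_edges G (verts G - T) \<union> cut_edges G T"
    and disjoint: "inner_edges G T \<inter> inner_edges G (verts G - T) = {}"
      "inner_edges G T \<inter> cut_edges G T = {}" "inner_edges G (verts G - T) \<inter> cut_edges G T = {}"
    using stable_graph_ends_subset[OF st] stable_graph_ends_nonempty[OF st]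
    unfolding inner_edges_def cut_edges_def by blast+
  moreover have "verts G = T \<union> (verts G - T)" using T by blast
  ultimately have "int g = sub_genus G (T \<union> (verts G - T))
      (inner_edges G T \<union> inner_edges G (verts G - T) \<union> cut_edges G T)"
    using stable_graph_genus[OF st] by simp
  also have "\<dots> = sub_genus G T (inner_edges G T) + sub_genus G (verts G - T) (inner_edges G (verts G - T))
     + int (card (cut_edges G T)) - 1"
    using stable_graph_finite_verts[OF st] T finite_subset disjoint
    by (intro sub_genus_Un) (auto simp: finite_inner_edges[OF st] finite_cut_edges[OF st])
  finally show ?thesis .
qed

lemma rational_tail_complement_genus:
  assumes "stable_graph g n G" "rational_tail G T"
  shows "sub_genus G (verts G - T) (inner_edges G (verts G - T)) = int g"
  using sub_genus_complement[OF assms(1) rational_tail_subset[OF assms(2)]] assms(2)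
  unfolding rational_tail_iff by simp

lemma cut_edges_complement:
  "stable_graph g n G \<Longrightarrow> cut_edges G (verts G - T) = cut_edges G T"
  using stable_graph_ends_subset unfolding cut_edges_def by blast

lemma rational_tail_complement:
  assumes st: "stable_graph 0 n G" and T: "rational_tail G T"
  shows "rational_tail G (verts G - T)"
proof -
  obtain e0 a b where "b \<in> verts G" "b \<notin> T"
    using rational_tail_cut_edge[OF st T] by metis
  then show ?thesis
    using rational_tail_complement_connected[OF st T] rational_tail_complement_genus[OF st T]
      cut_edges_complement[OF st] T unfolding rational_tail_iff by auto
qed

lemma marks_subset: "marks n G T \<subseteq> {1..n}"
  unfolding marks_def by auto

lemma marks_mono: "T \<subseteq> T' \<Longrightarrow> marks n G T \<subseteq> marks n G T'"
  unfolding marks_def by auto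

lemma marks_complement: "stable_graph g n G \<Longrightarrow> marks n G (verts G - T) = {1..n} - marks n G T"
  using stable_graph_leg unfolding marks_def by auto

lemma sum_incidences_le:
  assumes st: "stable_graph g n G" and e: "e \<in> edges G" and fT: "finite T"
  shows "(\<Sum>v\<in>T. if ends G e = {v} then 2 else if v \<in> ends G e then 1 else 0::nat)
     \<le> 2 * of_bool (e \<in> inner_edges G T) + of_bool (e \<in> cut_edges G T)"
proof (cases "\<exists>x. ends G e = {x}")
  case True
  then obtain x where x: "ends G e = {x}" by blast
  have "(\<Sum>v\<in>T. if ends G e = {v} then 2 else if v \<in> ends G e then 1 else 0::nat)
      = (\<Sum>v\<in>T. 2 * of_bool (v = x))"
    using x by (intro sum.cong) auto
  also have "\<dots> = 2 * card (T \<inter> {x})" using fT by (simp add: sum_distrib_left[symmetric])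
  finally show ?thesis using x e unfolding inner_edges_def by (cases "x \<in> T") auto
next
  case False
  have "(\<Sum>v\<in>T. if ends G e = {v} then 2 else if v \<in> ends G e then 1 else 0::nat)
      = (\<Sum>v\<in>T. of_bool (v \<in> ends G e))"
    using False by (intro sum.cong) auto
  also have "\<dots> = card (T \<inter> ends G e)" using fT by (simp add: Collect_mem_eq)
  finally have sum_eq: "(\<Sum>v\<in>T. if ends G e = {v} then 2 else if v \<in> ends G e then 1 else 0::nat)
      = card (T \<inter> ends G e)" .
  have fin: "finite (ends G e)" and le2: "card (ends G e) \<le> 2"
    using stable_graph_ends_finite[OF st e] stable_graph_card_ends[OF st e] by auto
  consider "ends G e \<subseteq> T" | "ends G e \<inter> T = {}" | "e \<in> cut_edges G T" "\<not> ends G e \<subseteq> T"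
    using e unfolding cut_edges_def by blast
  then show ?thesis
  proof cases
    case 1
    then show ?thesis using sum_eq le2 e card_mono[OF fin, of "T \<inter> ends G e"]
      unfolding inner_edges_def by auto
  next
    case 2
    then show ?thesis using sum_eq by (simp add: Int_commute)
  next
    case 3
    then have "card (T \<inter> ends G e) < card (ends G e)" using fin by (intro psubset_card_mono) auto
    then show ?thesis using sum_eq le2 3 unfolding inner_edges_def by auto
  qed
qed

lemma sum_valence_le:
  assumes st: "stable_graph g n G" and fT: "finite T"
  shows "(\<Sum>v\<in>T. valence n G v)
    \<le> 2 * card (inner_edges G T) + card (cut_edges G T) + card (marks n G T)"
proof -
  let ?inc = "\<lambda>e v. if ends G e = {v} then 2 else if v \<in> ends G e then 1 else 0::nat"
  have "(\<Sum>v\<in>T. \<Sum>e\<in>edges G. ?inc e v) = (\<Sum>e\<in>edges G. \<Sum>v\<in>T. ?inc e v)"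
    by (rule sum.swap)
  also have "\<dots> \<le> (\<Sum>e\<in>edges G. 2 * of_bool (e \<in> inner_edges G T) + of_bool (e \<in> cut_edges G T))"
    by (intro sum_mono sum_incidences_le[OF st _ fT])
  also have "\<dots> = 2 * card (edges G \<inter> inner_edges G T) + card (edges G \<inter> cut_edges G T)"
    using stable_graph_finite_edges[OF st]
    by (simp add: sum.distrib sum_distrib_left[symmetric] Collect_mem_eq)
  also have "\<dots> = 2 * card (inner_edges G T) + card (cut_edges G T)"
    unfolding inner_edges_def cut_edges_def by (simp add: Int_absorb1)
  finally have edge_part: "(\<Sum>v\<in>T. \<Sum>e\<in>edges G. ?inc e v)
    \<le> 2 * card (inner_edges G T) + card (cut_edges G T)" .
  have "marks n G T = (\<Union>v\<in>T. {i\<in>{1..n}. leg G i = v})" unfolding marks_def by auto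
  then have leg_part: "(\<Sum>v\<in>T. card {i\<in>{1..n}. leg G i = v}) = card (marks n G T)"
    using fT by (simp only:) (rule card_UN_disjoint[symmetric]; auto)
  show ?thesis
    using edge_part leg_part unfolding valence_def sum.distrib by linarith
qed

text \<open>Stability forces every vertex of a rational tail to have genus 0 and valence at least 3,
  while the tree T has only card T - 1 inner edges and one cut edge; the remaining
  valence must come from at least card T + 1 legs.\<close>
lemma rational_tail_card_marks:
  assumes st: "stable_graph g n G" and T: "rational_tail G T"
  shows "card (marks n G T) \<ge> 2"
proof -
  have TV: "T \<subseteq> verts G" and "T \<noteq> {}" using T unfolding rational_tail_iff by auto
  have fT: "finite T" using stable_graph_finite_verts[OF st] TV finite_subset by blast
  have "card T \<le> card (inner_edges G T) + 1"
    using connected_sub_card_le rational_tail_connected[OF T] fT \<open>T \<noteq> {}\<close>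
      finite_inner_edges[OF st] by blast
  moreover have "(\<Sum>v\<in>T. int (gen G v)) + int (card (inner_edges G T)) - int (card T) + 1 = 0"
    using rational_tail_genus[OF T] unfolding sub_genus_def by simp
  moreover have "(\<Sum>v\<in>T. int (gen G v)) \<ge> 0" by (simp add: sum_nonneg)
  ultimately have gen_sum: "(\<Sum>v\<in>T. int (gen G v)) = 0"
    and edges: "card (inner_edges G T) + 1 = card T" by linarith+
  have "\<forall>v\<in>T. gen G v = 0" using gen_sum fT by (simp add: sum_nonneg_eq_0_iff)
  then have "\<forall>v\<in>T. valence n G v \<ge> 3" using stable_graph_stability[OF st] TV by fastforce
  then have "(\<Sum>v\<in>T. 3) \<le> (\<Sum>v\<in>T. valence n G v)"
    by (intro sum_mono) auto
  then have "3 * card T \<le> (\<Sum>v\<in>T. valence n G v)" by simp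
  also have "\<dots> \<le> 2 * card (inner_edges G T) + card (cut_edges G T) + card (marks n G T)"
    by (rule sum_valence_le[OF st fT])
  finally show ?thesis
    using edges T \<open>T \<noteq> {}\<close> fT unfolding rational_tail_iff by (simp add: card_gt_0_iff)
qed

text \<open>Two disjoint connected parts of a connected genus-0 subgraph are joined by at most one
  edge, since each further edge would raise the genus of their union.\<close>
lemma card_edges_between_le_1:
  assumes st: "stable_graph g n G"
    and M: "M \<subseteq> verts G" "connected_sub G M (inner_edges G M)" "sub_genus G M (inner_edges G M) = 0"
    and C: "C \<subseteq> M" "C \<noteq> {}" "connected_sub G C (inner_edges G C)"
    and X: "X \<subseteq> M" "X \<noteq> {}" "connected_sub G X (inner_edges G X)"
    and CX: "C \<inter> X = {}"
  shows "card (edges_between G C X) \<le> 1"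
proof -
  have fM: "finite M" using M(1) stable_graph_finite_verts[OF st] finite_subset by blast
  then have fC: "finite C" and fX: "finite X" using C(1) X(1) finite_subset by blast+
  have fB: "finite (edges_between G C X)"
    unfolding edges_between_def using stable_graph_finite_edges[OF st] by simp
  have ends_ne: "\<forall>e\<in>edges G. ends G e \<noteq> {}" using stable_graph_ends_nonempty[OF st] by blast
  have between_inner: "ends G e \<subseteq> C \<union> X" if e: "e \<in> edges_between G C X" for e
  proof -
    obtain p q where pq: "p \<in> ends G e" "p \<in> C" "q \<in> ends G e" "q \<in> X" and "e \<in> edges G"
      using e unfolding edges_between_def by blast
    moreover have "p \<noteq> q" using pq CX by blast
    ultimately have "ends G e = {p, q}" using stable_graph_ends_eq[OF st] by blast
    then show ?thesis using pq by simp
  qed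
  have inner_Un: "inner_edges G (C \<union> X) = inner_edges G C \<union> inner_edges G X \<union> edges_between G C X"
    using between_inner unfolding inner_edges_def edges_between_def by blast
  have "sub_genus G (C \<union> X) (inner_edges G (C \<union> X))
      = sub_genus G C (inner_edges G C) + sub_genus G X (inner_edges G X) + int (card (edges_between G C X)) - 1"
    unfolding inner_Un
  proof (rule sub_genus_Un)
    show "inner_edges G C \<inter> inner_edges G X = {}"
      using CX ends_ne unfolding inner_edges_def by blast
    show "inner_edges G C \<inter> edges_between G C X = {}" "inner_edges G X \<inter> edges_between G C X = {}"
      using CX unfolding inner_edges_def edges_between_def by blast+
  qed (use fC fX fB CX finite_inner_edges[OF st] in auto)
  moreover have "sub_genus G (C \<union> X) (inner_edges G (C \<union> X)) \<le> 0"
  proof -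
    have "inner_edges G (C \<union> X) = {e\<in>inner_edges G M. ends G e \<subseteq> C \<union> X}"
      using C(1) X(1) unfolding inner_edges_def by auto
    then show ?thesis
      using sub_genus_induced_le[OF M(2) fM finite_inner_edges[OF st], of "C \<union> X"] C X M(3) by auto
  qed
  moreover have "sub_genus G C (inner_edges G C) \<ge> 0" "sub_genus G X (inner_edges G X) \<ge> 0"
    using sub_genus_nonneg C X fC fX finite_inner_edges[OF st] by blast+
  ultimately show ?thesis by linarith
qed

lemma cut_edge_inside_rational_tail:
  assumes T1: "rational_tail G T1" and c2: "cut_edges G T2 = {e2}"
    and meet: "T1 \<inter> T2 \<noteq> {}" and not_sub: "\<not> T1 \<subseteq> T2"
  shows "ends G e2 \<subseteq> T1"
proof -
  obtain x y where "x \<in> T1" "x \<in> T2" "y \<in> T1" "y \<notin> T2" using meet not_sub by blast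
  then obtain e p q where e: "e \<in> inner_edges G T1" "ends G e = {p, q}" "p \<in> T2" "q \<notin> T2"
    using connected_sub_crossing_edge[OF rational_tail_connected[OF T1]] by metis
  then have "e = e2"
    using cut_edges_singletonD[OF c2] unfolding inner_edges_def by auto
  then show ?thesis using e(1) unfolding inner_edges_def by simp
qed

text \<open>If the cut edge of T2 touches T1, the connected complement of T1 cannot reach beyond T2.\<close>
lemma rational_tails_cover:
  assumes st: "stable_graph g n G" and T1: "rational_tail G T1" and T2: "rational_tail G T2"
    and c2: "cut_edges G T2 = {e2}" and touch: "ends G e2 \<inter> T1 \<noteq> {}" and not_sub: "\<not> T2 \<subseteq> T1"
  shows "verts G = T1 \<union> T2"
proof (rule ccontr)
  assume "verts G \<noteq> T1 \<union> T2"
  then obtain x where x: "x \<in> verts G - T1" "x \<notin> T2"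
    using rational_tail_subset[OF T1] rational_tail_subset[OF T2] by blast
  obtain y where y: "y \<in> verts G - T1" "y \<in> T2"
    using not_sub rational_tail_subset[OF T2] by blast
  obtain e p q where e: "e \<in> inner_edges G (verts G - T1)" "ends G e = {p, q}" "p \<in> T2" "q \<notin> T2"
    using connected_sub_crossing_edge[OF rational_tail_complement_connected[OF st T1] y x] by blast
  then have "e = e2" using cut_edges_singletonD[OF c2] unfolding inner_edges_def by auto
  then show False using e(1) touch unfolding inner_edges_def by auto
qed

lemma rational_tails_nested_or_cover_or_apart:
  assumes st: "stable_graph g n G" and T1: "rational_tail G T1" and T2: "rational_tail G T2"
  shows "T1 \<subseteq> T2 \<or> T2 \<subseteq> T1 \<or> verts G = T1 \<union> T2 \<or> (T1 \<inter> T2 = {} \<and> edges_between G T1 T2 = {})"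
proof -
  obtain e2 where c2: "cut_edges G T2 = {e2}" "e2 \<in> edges G"
    using rational_tail_cut_edge[OF st T2] by metis
  consider "T1 \<subseteq> T2 \<or> T2 \<subseteq> T1" | "\<not> T1 \<subseteq> T2" "\<not> T2 \<subseteq> T1" "T1 \<inter> T2 \<noteq> {}"
    | "T1 \<inter> T2 = {}" "edges_between G T1 T2 = {}" | "T1 \<inter> T2 = {}" "edges_between G T1 T2 \<noteq> {}"
    by blast
  then show ?thesis
  proof cases
    case 2
    then have "ends G e2 \<inter> T1 \<noteq> {}"
      using cut_edge_inside_rational_tail[OF T1 c2(1)] stable_graph_ends_nonempty[OF st c2(2)] by blast
    then show ?thesis using rational_tails_cover[OF st T1 T2 c2(1)] 2 by blast
  next
    case 4
    then obtain e where e: "e \<in> edges G" "ends G e \<inter> T1 \<noteq> {}" "ends G e \<inter> T2 \<noteq> {}"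
      unfolding edges_between_def by blast
    then have "e = e2" using cut_edges_singletonD[OF c2(1)] 4(1) by blast
    then show ?thesis using rational_tails_cover[OF st T1 T2 c2(1)] e 4(1) rational_tail_iff T2 by blast
  qed blast+
qed

lemma sub_genus_subset_rational_tail:
  assumes st: "stable_graph g n G" and M: "rational_tail G M"
    and C: "C \<subseteq> M" "C \<noteq> {}" "connected_sub G C (inner_edges G C)"
  shows "sub_genus G C (inner_edges G C) = 0"
proof -
  have fM: "finite M"
    using rational_tail_subset[OF M] stable_graph_finite_verts[OF st] finite_subset by blast
  have "inner_edges G C = {e\<in>inner_edges G M. ends G e \<subseteq> C}"
    using C(1) unfolding inner_edges_def by auto
  then have "sub_genus G C (inner_edges G C) \<le> 0"
    using sub_genus_induced_le[OF rational_tail_connected[OF M] fM finite_inner_edges[OF st] C(1,2)]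
      rational_tail_genus[OF M] by simp
  moreover have "finite C" using fM C(1) finite_subset by blast
  ultimately show ?thesis using sub_genus_nonneg[OF C(3)] C(2) finite_inner_edges[OF st] by fastforce
qed

text \<open>The only edge leaving M starts in X, so every edge leaving a component of M - X ends in X.\<close>
lemma cut_edges_vertex_component:
  assumes st: "stable_graph g n G"
    and c: "cut_edges G M = {e0}" "ends G e0 = {a, b}" "b \<notin> M" and a: "a \<in> X"
  shows "cut_edges G (vertex_component G (M - X) u) = edges_between G (vertex_component G (M - X) u) X"
proof (intro equalityI subsetI)
  let ?C = "vertex_component G (M - X) u"
  have CM: "?C \<subseteq> M - X" by (rule vertex_component_subset)
  fix e assume e: "e \<in> cut_edges G ?C"
  then obtain p q where pq: "e \<in> edges G" "p \<in> ends G e" "p \<in> ?C" "q \<in> ends G e" "q \<notin> ?C"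
    unfolding cut_edges_def by blast
  have "q \<in> M"
  proof (rule ccontr)
    assume "q \<notin> M"
    then have "e = e0" using cut_edges_singletonD[OF c(1) pq(1)] pq CM by blast
    then show False using pq(2,3) c(2,3) a CM by auto
  qed
  moreover have "ends G e = {p, q}" using stable_graph_ends_eq[OF st pq(1,2,4)] pq(3,5) by blast
  ultimately have "q \<in> X" using vertex_component_closed[OF pq(3) _ pq(1)] pq(5) by blast
  then show "e \<in> edges_between G ?C X" using pq unfolding edges_between_def by blast
next
  fix e assume "e \<in> edges_between G (vertex_component G (M - X) u) X"
  then show "e \<in> cut_edges G (vertex_component G (M - X) u)"
    using vertex_component_subset unfolding edges_between_def cut_edges_def by blast
qed

lemma rational_tail_component:
  assumes st: "stable_graph g n G" and M: "rational_tail G M"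
    and c: "cut_edges G M = {e0}" "ends G e0 = {a, b}" "b \<notin> M"
    and X: "X \<subseteq> M" "a \<in> X" "connected_sub G X (inner_edges G X)"
    and u0: "u0 \<in> M - X"
  shows "rational_tail G (vertex_component G (M - X) u0)"
proof -
  let ?C = "vertex_component G (M - X) u0"
  have CM: "?C \<subseteq> M - X" by (rule vertex_component_subset)
  have u0C: "u0 \<in> ?C" using u0 by (rule vertex_component_self)
  have MV: "M \<subseteq> verts G" using M by (rule rational_tail_subset)
  obtain e p q where "e \<in> inner_edges G M" "ends G e = {p, q}" "p \<in> ?C" "q \<notin> ?C"
    using connected_sub_crossing_edge[OF rational_tail_connected[OF M], of u0 ?C a] u0 u0C X(1,2) CM
    by blast
  then have "cut_edges G ?C \<noteq> {}" unfolding inner_edges_def cut_edges_def by blast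
  moreover have "card (edges_between G ?C X) \<le> 1"
    using card_edges_between_le_1[OF st MV rational_tail_connected[OF M] rational_tail_genus[OF M]
        _ _ connected_vertex_component X(1) _ X(3)] CM u0C X(2) by blast
  moreover have "finite (cut_edges G ?C)" by (rule finite_cut_edges[OF st])
  ultimately have "card (cut_edges G ?C) = 1"
    unfolding cut_edges_vertex_component[OF st c X(2)]
    using card_gt_0_iff[of "edges_between G ?C X"] by linarith
  then show ?thesis
    unfolding rational_tail_iff
    using CM MV u0C connected_vertex_component sub_genus_subset_rational_tail[OF st M] by blast
qed

section \<open>Admissible complexes and the assignment Z_K\<close>

lemma set_partition_two_blocks:
  assumes "A \<union> B = X" "A \<inter> B = {}"
  shows "set_partition X ({A, B} - {{}})"
  using assms unfolding set_partition_def by auto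

lemma set_partition_at_most_two_blocks:
  assumes P: "set_partition X P" and "finite P" "card P < 3"
  obtains A B where "A \<in> insert {} P" "B \<in> insert {} P" "A \<union> B = X" "A \<inter> B = {}"
proof -
  have "card P = 0 \<or> card P = 1 \<or> card P = 2" using assms(3) by linarith
  then show ?thesis
  proof (elim disjE)
    assume "card P = 0"
    then have "P = {}" using assms(2) by simp
    then show ?thesis using that[of "{}" "{}"] P unfolding set_partition_def by simp
  next
    assume "card P = 1"
    then obtain A where "P = {A}" by (rule card_1_singletonE)
    then show ?thesis using that[of A "{}"] P unfolding set_partition_def by simp
  next
    assume "card P = 2"
    then obtain A B where "P = {A, B}" "A \<noteq> B" by (auto simp: card_2_iff)
    then show ?thesis using that[of A B] P unfolding set_partition_def by auto
  qed
qed

lemma at_least_triparted_iff: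
  assumes "K \<subseteq> Pow {1..n}" "{} \<in> K"
  shows "at_least_triparted n K \<longleftrightarrow> (\<forall>A\<in>K. \<forall>B\<in>K. A \<union> B = {1..n} \<longrightarrow> A \<inter> B \<noteq> {})"
proof
  assume tri: "at_least_triparted n K"
  show "\<forall>A\<in>K. \<forall>B\<in>K. A \<union> B = {1..n} \<longrightarrow> A \<inter> B \<noteq> {}"
  proof (intro ballI impI notI)
    fix A B assume "A \<in> K" "B \<in> K" "A \<union> B = {1..n}" "A \<inter> B = {}"
    moreover have "card ({A, B} - {{}}) \<le> card {A, B}" by (rule card_mono) auto
    moreover have "card {A, B} \<le> 2" by (cases "A = B") auto
    ultimately show False
      using tri[unfolded at_least_triparted_def, rule_format, of "{A, B} - {{}}"]
        set_partition_two_blocks by auto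
  qed
next
  assume no_pair: "\<forall>A\<in>K. \<forall>B\<in>K. A \<union> B = {1..n} \<longrightarrow> A \<inter> B \<noteq> {}"
  show "at_least_triparted n K" unfolding at_least_triparted_def
  proof (intro allI impI)
    fix P assume P: "set_partition {1..n} P \<and> P \<subseteq> K"
    then have "finite P" using assms(1) finite_subset[of P "Pow {1..n}"] by auto
    show "card P \<ge> 3"
    proof (rule ccontr)
      assume "\<not> card P \<ge> 3"
      then obtain A B where "A \<in> insert {} P" "B \<in> insert {} P" "A \<union> B = {1..n}" "A \<inter> B = {}"
        using set_partition_at_most_two_blocks P \<open>finite P\<close> by (metis not_le)
      then show False using no_pair P assms(2) by blast
    qed
  qed
qed

lemma simplicial_complex_subset_closed:
  "simplicial_complex n K \<Longrightarrow> A \<in> K \<Longrightarrow> B \<subseteq> A \<Longrightarrow> B \<in> K"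
  unfolding simplicial_complex_def by blast

lemma simplicial_complex_complementary_faces:
  assumes "simplicial_complex n K" "at_least_triparted n K" "A \<in> K" "B \<in> K" "A \<union> B = {1..n}"
  shows "A \<inter> B \<noteq> {}"
proof -
  have "{} \<in> K" using simplicial_complex_subset_closed[OF assms(1,3)] by blast
  then show ?thesis
    using assms at_least_triparted_iff[of K n] unfolding simplicial_complex_def by blast
qed

lemma at_least_triparted_card_complement:
  assumes K: "simplicial_complex n K" "at_least_triparted n K" and A: "A \<in> K"
  shows "card ({1..n} - A) \<ge> 2"
proof (rule ccontr)
  assume "\<not> card ({1..n} - A) \<ge> 2"
  then have "card ({1..n} - A) = 0 \<or> card ({1..n} - A) = 1" by linarith
  then have "{1..n} - A = {} \<or> (\<exists>i\<in>{1..n}. {1..n} - A = {i})"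
    by (auto simp: card_1_singleton_iff)
  then have "{1..n} - A \<in> K"
    using K(1) A simplicial_complex_subset_closed[OF K(1) A, of "{}"] unfolding simplicial_complex_def
    by auto
  moreover have "A \<union> ({1..n} - A) = {1..n}" using K(1) A unfolding simplicial_complex_def by auto
  ultimately show False using simplicial_complex_complementary_faces[OF K A] by blast
qed

definition admissible_complex :: "nat \<Rightarrow> nat \<Rightarrow> nat set set \<Rightarrow> bool" where
  "admissible_complex g n K \<longleftrightarrow> simplicial_complex n K \<and> (g = 0 \<longrightarrow> at_least_triparted n K)"

lemma admissible_tails_not_cover:
  assumes st: "stable_graph g n G" and K: "admissible_complex g n K"
    and T1: "rational_tail G T1" "marks n G T1 \<in> K"
    and T2: "rational_tail G T2" "marks n G T2 \<in> K"
  shows "verts G \<noteq> T1 \<union> T2"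
proof
  assume cover: "verts G = T1 \<union> T2"
  then have compl: "verts G - T1 \<subseteq> T2" by blast
  show False
  proof (cases "g = 0")
    case False
    have fT2: "finite T2"
      using stable_graph_finite_verts[OF st] rational_tail_subset[OF T2(1)] finite_subset by blast
    have "inner_edges G (verts G - T1) = {e\<in>inner_edges G T2. ends G e \<subseteq> verts G - T1}"
      using compl unfolding inner_edges_def by auto
    moreover obtain b where "b \<in> verts G - T1"
      using rational_tail_cut_edge[OF st T1(1)] by (metis Diff_iff)
    ultimately have "sub_genus G (verts G - T1) (inner_edges G (verts G - T1))
        \<le> sub_genus G T2 (inner_edges G T2)"
      using sub_genus_induced_le[OF rational_tail_connected[OF T2(1)] fT2 finite_inner_edges[OF st] compl]
      by auto
    then show False
      using rational_tail_complement_genus[OF st T1(1)] rational_tail_genus[OF T2(1)] False by simp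
  next
    case True
    have "marks n G (verts G - T1) \<in> K"
      using K T2(2) marks_mono[OF compl] simplicial_complex_subset_closed
      unfolding admissible_complex_def by blast
    moreover have "marks n G T1 \<union> marks n G (verts G - T1) = {1..n}"
      "marks n G T1 \<inter> marks n G (verts G - T1) = {}"
      using marks_complement[OF st, of T1] marks_subset[of n G T1] by auto
    ultimately show False
      using simplicial_complex_complementary_faces T1(2) K True unfolding admissible_complex_def by blast
  qed
qed

definition K_tails :: "nat \<Rightarrow> nat set set \<Rightarrow> sgraph \<Rightarrow> nat set set" where
  "K_tails n K G = {T. rational_tail G T \<and> marks n G T \<in> K}"

definition maximal_K_tail :: "nat \<Rightarrow> nat set set \<Rightarrow> sgraph \<Rightarrow> nat set \<Rightarrow> bool" where
  "maximal_K_tail n K G T \<longleftrightarrow> T \<in> K_tails n K G \<and> (\<forall>T'\<in>K_tails n K G. T \<subseteq> T' \<longrightarrow> T' = T)"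

lemma Z_of_stable: "stable_graph g n G \<Longrightarrow> Z_of g n K G = \<Union>(K_tails n K G)"
  unfolding Z_of_def K_tails_def by simp

lemma maximal_K_tailD:
  "maximal_K_tail n K G M \<Longrightarrow> rational_tail G M \<and> marks n G M \<in> K"
  unfolding maximal_K_tail_def K_tails_def by simp

lemma K_tail_le_maximal:
  assumes st: "stable_graph g n G" and T: "T \<in> K_tails n K G"
  obtains M where "maximal_K_tail n K G M" "T \<subseteq> M"
proof -
  have "K_tails n K G \<subseteq> Pow (verts G)" unfolding K_tails_def using rational_tail_subset by blast
  then have "finite (K_tails n K G)" using stable_graph_finite_verts[OF st] finite_subset by blast
  then show ?thesis
    using finite_has_maximal2[OF _ T] that unfolding maximal_K_tail_def by metis
qed

lemma maximal_K_tails_apart: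
  assumes st: "stable_graph g n G" and K: "admissible_complex g n K"
    and M1: "maximal_K_tail n K G M1" and M2: "maximal_K_tail n K G M2" and "M1 \<noteq> M2"
  shows "M1 \<inter> M2 = {} \<and> edges_between G M1 M2 = {}"
proof -
  have "\<not> M1 \<subseteq> M2" "\<not> M2 \<subseteq> M1" using M1 M2 \<open>M1 \<noteq> M2\<close> unfolding maximal_K_tail_def by blast+
  moreover have "verts G \<noteq> M1 \<union> M2"
    using admissible_tails_not_cover[OF st K] maximal_K_tailD[OF M1] maximal_K_tailD[OF M2] by blast
  ultimately show ?thesis
    using rational_tails_nested_or_cover_or_apart[OF st] maximal_K_tailD[OF M1] maximal_K_tailD[OF M2]
    by blast
qed

lemma Z_of_eq_Union_maximal:
  assumes "stable_graph g n G"
  shows "Z_of g n K G = \<Union>{M. maximal_K_tail n K G M}"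
proof -
  have "\<Union>(K_tails n K G) \<subseteq> \<Union>{M. maximal_K_tail n K G M}"
  proof
    fix x assume "x \<in> \<Union>(K_tails n K G)"
    then obtain T where "T \<in> K_tails n K G" "x \<in> T" by blast
    then show "x \<in> \<Union>{M. maximal_K_tail n K G M}"
      using K_tail_le_maximal[OF assms] by (metis UnionI mem_Collect_eq subsetD)
  qed
  moreover have "\<Union>{M. maximal_K_tail n K G M} \<subseteq> \<Union>(K_tails n K G)"
    unfolding maximal_K_tail_def by blast
  ultimately show ?thesis using Z_of_stable[OF assms] by blast
qed

lemma Z_of_proper:
  assumes st: "stable_graph g n G" and K: "admissible_complex g n K"
  shows "Z_of g n K G \<noteq> verts G"
proof
  assume Z: "Z_of g n K G = verts G"
  then obtain M where M: "maximal_K_tail n K G M"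
    using Z_of_eq_Union_maximal[OF st] stable_graph_verts_nonempty[OF st] by (metis Union_empty empty_Collect_eq)
  obtain e a b where "cut_edges G M = {e}" "e \<in> edges G" "ends G e = {a, b}" "a \<in> M" "b \<in> verts G" "b \<notin> M"
    using rational_tail_cut_edge[OF st] maximal_K_tailD[OF M] by metis
  moreover obtain M' where "maximal_K_tail n K G M'" "b \<in> M'"
    using Z Z_of_eq_Union_maximal[OF st] \<open>b \<in> verts G\<close> by (metis UnionE mem_Collect_eq)
  ultimately show False
    using maximal_K_tails_apart[OF st K M] unfolding edges_between_def by blast
qed

lemma Z_of_supported:
  assumes K: "admissible_complex g n K"
  shows "supported_on_rational_tails g n (Z_of g n K)"
  unfolding supported_on_rational_tails_def
proof (intro allI impI)
  fix G assume st: "stable_graph g n G"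
  show "\<exists>\<T>. (\<forall>T\<in>\<T>. rational_tail G T) \<and>
      (\<forall>T1\<in>\<T>. \<forall>T2\<in>\<T>. T1 \<noteq> T2 \<longrightarrow>
        T1 \<inter> T2 = {} \<and> (\<forall>e\<in>edges G. \<not> (ends G e \<inter> T1 \<noteq> {} \<and> ends G e \<inter> T2 \<noteq> {}))) \<and>
      \<Union>\<T> = Z_of g n K G"
  proof (intro exI conjI)
    let ?\<T> = "{M. maximal_K_tail n K G M}"
    show "\<forall>T\<in>?\<T>. rational_tail G T" using maximal_K_tailD by blast
    show "\<forall>T1\<in>?\<T>. \<forall>T2\<in>?\<T>. T1 \<noteq> T2 \<longrightarrow>
        T1 \<inter> T2 = {} \<and> (\<forall>e\<in>edges G. \<not> (ends G e \<inter> T1 \<noteq> {} \<and> ends G e \<inter> T2 \<noteq> {}))"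
      using maximal_K_tails_apart[OF st K] unfolding edges_between_def by blast
    show "\<Union>?\<T> = Z_of g n K G" using Z_of_eq_Union_maximal[OF st] by simp
  qed
qed

section \<open>Preimages of rational tails under contractions\<close>

locale stable_contraction =
  fixes g n G' G S f h
  assumes stable': "stable_graph g n G'" and stable: "stable_graph g n G"
    and contraction: "contraction n G' G S f h"
begin

abbreviation fiber_edges :: "nat \<Rightarrow> nat set" where
  "fiber_edges x \<equiv> {e\<in>S. ends G' e \<subseteq> fiber G' f x}"

lemma contracted_subset: "S \<subseteq> edges G'"
  using contraction unfolding contraction_def by simp

lemma image_verts: "f ` verts G' = verts G"
  using contraction unfolding contraction_def by simp

lemma bij_edges: "bij_betw h (edges G' - S) (edges G)"
  using contraction unfolding contraction_def by simp

lemma ends_image: "e \<in> edges G' - S \<Longrightarrow> ends G (h e) = f ` ends G' e"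
  using contraction unfolding contraction_def by simp

lemma card_image_contracted: "e \<in> S \<Longrightarrow> card (f ` ends G' e) = 1"
  using contraction unfolding contraction_def by simp

lemma leg_image: "i \<in> {1..n} \<Longrightarrow> leg G i = f (leg G' i)"
  using contraction unfolding contraction_def by simp

lemma fiber_connected: "v \<in> verts G \<Longrightarrow> connected_sub G' (fiber G' f v) (fiber_edges v)"
  using contraction unfolding contraction_def by simp

lemma fiber_genus: "v \<in> verts G \<Longrightarrow> int (gen G v) = sub_genus G' (fiber G' f v) (fiber_edges v)"
  using contraction unfolding contraction_def by simp

lemma mem_fiber_iff: "u \<in> fiber G' f x \<longleftrightarrow> u \<in> verts G' \<and> f u = x"
  unfolding fiber_def by simp

lemma map_vertex: "u \<in> verts G' \<Longrightarrow> f u \<in> verts G"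
  using image_verts by (metis imageI)

lemma finite_fiber: "finite (fiber G' f x)"
  using stable_graph_finite_verts[OF stable'] unfolding fiber_def by simp

lemma fiber_nonempty: "x \<in> verts G \<Longrightarrow> fiber G' f x \<noteq> {}"
  using image_verts mem_fiber_iff by (metis empty_iff imageE)

lemma contracted_edge_in_fiber:
  assumes e: "e \<in> S" and p: "p \<in> ends G' e"
  shows "ends G' e \<subseteq> fiber G' f (f p)"
proof
  fix u assume u: "u \<in> ends G' e"
  obtain x where x: "f ` ends G' e = {x}" using card_image_contracted[OF e] card_1_singletonE by blast
  have "f u = f p" using x u p by (metis imageI singletonD)
  moreover have "u \<in> verts G'" using u e contracted_subset stable_graph_ends_subset[OF stable'] by blast
  ultimately show "u \<in> fiber G' f (f p)" unfolding fiber_def by simp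
qed

lemma fiber_edges_subset_inner:
  "fiber G' f x \<subseteq> W \<Longrightarrow> fiber_edges x \<subseteq> inner_edges G' W"
  using contracted_subset unfolding inner_edges_def by blast

lemma bij_betw_edges_filter:
  "bij_betw h {e\<in>edges G' - S. P (f ` ends G' e)} {e\<in>edges G. P (ends G e)}"
proof -
  have "inj_on h (edges G' - S)" using bij_edges unfolding bij_betw_def by simp
  then have "inj_on h {e\<in>edges G' - S. P (f ` ends G' e)}" by (rule inj_on_subset) blast
  moreover have "h ` {e\<in>edges G' - S. P (f ` ends G' e)} = {e\<in>edges G. P (ends G e)}"
  proof (intro equalityI subsetI)
    fix e assume "e \<in> h ` {e\<in>edges G' - S. P (f ` ends G' e)}"
    then obtain e' where "e' \<in> edges G' - S" "P (f ` ends G' e')" "e = h e'" by blast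
    then show "e \<in> {e\<in>edges G. P (ends G e)}"
      using bij_betwE[OF bij_edges] ends_image by simp
  next
    fix e assume e: "e \<in> {e\<in>edges G. P (ends G e)}"
    then obtain e' where "e' \<in> edges G' - S" "e = h e'"
      using bij_edges unfolding bij_betw_def by blast
    then show "e \<in> h ` {e\<in>edges G' - S. P (f ` ends G' e)}" using e ends_image by auto
  qed
  ultimately show ?thesis unfolding bij_betw_def by blast
qed

definition preimage :: "nat set \<Rightarrow> nat set" where
  "preimage T = {u\<in>verts G'. f u \<in> T}"

lemma preimage_eq_UN_fiber: "preimage T = (\<Union>x\<in>T. fiber G' f x)"
  unfolding preimage_def fiber_def by auto

lemma marks_preimage: "marks n G' (preimage T) = marks n G T"
  unfolding marks_def preimage_def using leg_image stable_graph_leg[OF stable'] by auto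

lemma preimage_nonempty_iff: "T \<subseteq> verts G \<Longrightarrow> preimage T \<noteq> {} \<longleftrightarrow> T \<noteq> {}"
  unfolding preimage_eq_UN_fiber using fiber_nonempty by blast

lemma ends_subset_preimage_iff:
  "e \<in> edges G' \<Longrightarrow> ends G' e \<subseteq> preimage T \<longleftrightarrow> f ` ends G' e \<subseteq> T"
  using stable_graph_ends_subset[OF stable'] unfolding preimage_def by auto

lemma ends_meet_preimage_iff:
  "e \<in> edges G' \<Longrightarrow> ends G' e \<inter> preimage T \<noteq> {} \<longleftrightarrow> f ` ends G' e \<inter> T \<noteq> {}"
  using stable_graph_ends_subset[OF stable'] unfolding preimage_def by auto

lemma card_cut_edges_preimage: "card (cut_edges G' (preimage T)) = card (cut_edges G T)"
proof -
  let ?P = "\<lambda>E. E \<inter> T \<noteq> {} \<and> \<not> E \<subseteq> T"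
  have not_contracted: "e \<notin> S" if e: "e \<in> cut_edges G' (preimage T)" for e
  proof
    assume "e \<in> S"
    moreover obtain p where "p \<in> ends G' e" using e unfolding cut_edges_def by blast
    ultimately have fib: "ends G' e \<subseteq> fiber G' f (f p)" by (rule contracted_edge_in_fiber)
    obtain q r where q: "q \<in> ends G' e" "q \<notin> preimage T" and r: "r \<in> ends G' e" "r \<in> preimage T"
      using e unfolding cut_edges_def by blast
    have "q \<in> verts G'" "f q = f p" "f r = f p" using fib q(1) r(1) unfolding fiber_def by auto
    then show False using q(2) r(2) unfolding preimage_def by auto
  qed
  have "cut_edges G' (preimage T) = {e\<in>edges G' - S. ?P (f ` ends G' e)}"
  proof (intro equalityI subsetI)
    fix e assume e: "e \<in> cut_edges G' (preimage T)"
    then have "e \<in> edges G'" unfolding cut_edges_def by simp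
    then show "e \<in> {e\<in>edges G' - S. ?P (f ` ends G' e)}"
      using e not_contracted[OF e] ends_subset_preimage_iff ends_meet_preimage_iff
      unfolding cut_edges_def by simp
  next
    fix e assume e: "e \<in> {e\<in>edges G' - S. ?P (f ` ends G' e)}"
    then show "e \<in> cut_edges G' (preimage T)"
      using ends_subset_preimage_iff ends_meet_preimage_iff unfolding cut_edges_def by simp
  qed
  moreover have "cut_edges G T = {e\<in>edges G. ?P (ends G e)}" unfolding cut_edges_def by simp
  ultimately show ?thesis using bij_betw_same_card[OF bij_betw_edges_filter[of ?P]] by simp
qed

lemma inner_edges_preimage:
  assumes "T \<subseteq> verts G"
  shows "inner_edges G' (preimage T) = (\<Union>x\<in>T. fiber_edges x) \<union> {e\<in>edges G' - S. f ` ends G' e \<subseteq> T}"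
proof (intro equalityI subsetI)
  fix e assume e: "e \<in> inner_edges G' (preimage T)"
  then have eE: "e \<in> edges G'" and sub: "ends G' e \<subseteq> preimage T" unfolding inner_edges_def by auto
  show "e \<in> (\<Union>x\<in>T. fiber_edges x) \<union> {e\<in>edges G' - S. f ` ends G' e \<subseteq> T}"
  proof (cases "e \<in> S")
    case True
    obtain p where "p \<in> ends G' e" using stable_graph_ends_nonempty[OF stable' eE] by blast
    moreover from this have "f p \<in> T" using sub unfolding preimage_def by auto
    ultimately show ?thesis using contracted_edge_in_fiber[OF True] True by blast
  next
    case False
    then show ?thesis using ends_subset_preimage_iff[OF eE] sub eE by blast
  qed
next
  fix e assume "e \<in> (\<Union>x\<in>T. fiber_edges x) \<union> {e\<in>edges G' - S. f ` ends G' e \<subseteq> T}"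
  then show "e \<in> inner_edges G' (preimage T)"
    using ends_subset_preimage_iff contracted_subset
    unfolding inner_edges_def preimage_eq_UN_fiber by blast
qed

text \<open>The genus of the preimage adds up the genera of the fibers, which are the vertex genera
  of G by the definition of a weighted contraction.\<close>
lemma sub_genus_preimage:
  assumes T: "T \<subseteq> verts G"
  shows "sub_genus G' (preimage T) (inner_edges G' (preimage T)) = sub_genus G T (inner_edges G T)"
proof -
  have fT: "finite T" using T stable_graph_finite_verts[OF stable] finite_subset by blast
  have fS: "finite S" using contracted_subset stable_graph_finite_edges[OF stable'] finite_subset by blast
  let ?I = "{e\<in>edges G' - S. f ` ends G' e \<subseteq> T}"
  have card_I: "card ?I = card (inner_edges G T)"
    using bij_betw_same_card[OF bij_betw_edges_filter[of "\<lambda>E. E \<subseteq> T"]] unfolding inner_edges_def .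
  have fiber_edges_disjoint: "fiber_edges x \<inter> fiber_edges y = {}" if "x \<noteq> y" for x y
    using that stable_graph_ends_nonempty[OF stable'] contracted_subset unfolding fiber_def by fastforce
  have "card (inner_edges G' (preimage T)) = card (\<Union>x\<in>T. fiber_edges x) + card ?I"
    unfolding inner_edges_preimage[OF T]
    by (rule card_Un_disjoint) (use fT fS stable_graph_finite_edges[OF stable'] in auto)
  also have "card (\<Union>x\<in>T. fiber_edges x) = (\<Sum>x\<in>T. card (fiber_edges x))"
    by (rule card_UN_disjoint) (use fT fS fiber_edges_disjoint in auto)
  finally have card_inner: "card (inner_edges G' (preimage T))
      = (\<Sum>x\<in>T. card (fiber_edges x)) + card (inner_edges G T)"
    using card_I by simp
  have fibers_disjoint: "fiber G' f x \<inter> fiber G' f y = {}" if "x \<noteq> y" for x y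
    using that unfolding fiber_def by auto
  have card_pre: "card (preimage T) = (\<Sum>x\<in>T. card (fiber G' f x))"
    unfolding preimage_eq_UN_fiber
    by (rule card_UN_disjoint) (use fT finite_fiber fibers_disjoint in auto)
  have gen_pre: "(\<Sum>u\<in>preimage T. int (gen G' u)) = (\<Sum>x\<in>T. \<Sum>u\<in>fiber G' f x. int (gen G' u))"
    unfolding preimage_eq_UN_fiber
    by (rule sum.UNION_disjoint) (use fT finite_fiber fibers_disjoint in auto)
  have "(\<Sum>x\<in>T. int (gen G x)) = (\<Sum>x\<in>T. (\<Sum>u\<in>fiber G' f x. int (gen G' u))
      + int (card (fiber_edges x)) - int (card (fiber G' f x)) + 1)"
    using fiber_genus T unfolding sub_genus_def by (intro sum.cong) auto
  also have "\<dots> = (\<Sum>x\<in>T. \<Sum>u\<in>fiber G' f x. int (gen G' u)) + int (\<Sum>x\<in>T. card (fiber_edges x))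
      - int (\<Sum>x\<in>T. card (fiber G' f x)) + int (card T)"
    by (simp add: sum.distrib sum_subtractf)
  finally show ?thesis unfolding sub_genus_def using card_inner card_pre gen_pre by simp
qed

lemma rtrancl_adj_preimage_lift:
  assumes T: "T \<subseteq> verts G" and path: "(x, y) \<in> (adj G T (inner_edges G T))\<^sup>*"
    and u: "u \<in> fiber G' f x" and u': "u' \<in> fiber G' f y" and x: "x \<in> T"
  shows "(u, u') \<in> (adj G' (preimage T) (inner_edges G' (preimage T)))\<^sup>*"
  using path u'
proof (induction arbitrary: u' rule: rtrancl_induct)
  case base
  have "x \<in> verts G" using x T by blast
  moreover have "fiber G' f x \<subseteq> preimage T" using x unfolding preimage_eq_UN_fiber by blast
  ultimately show ?case
    using fiber_connected u base fiber_edges_subset_inner rtrancl_adj_mono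
    unfolding connected_sub_def by meson
next
  case (step y z)
  obtain e where e: "e \<in> inner_edges G T" "ends G e = {y, z}" and yz: "y \<in> T" "z \<in> T"
    using step(2) unfolding adj_iff by blast
  show ?case
  proof (cases "y = z")
    case True
    then show ?thesis using step.IH step.prems by simp
  next
    case False
    have "e \<in> edges G" using e(1) unfolding inner_edges_def by simp
    then obtain e' where e': "e' \<in> edges G' - S" "h e' = e"
      using bij_edges unfolding bij_betw_def by (metis imageE)
    then have "f ` ends G' e' = {y, z}" using ends_image[OF e'(1)] e(2) by simp
    then obtain p q where p: "p \<in> ends G' e'" "f p = y" and q: "q \<in> ends G' e'" "f q = z"
      by (metis imageE insertI1 insert_commute)
    have e'E: "e' \<in> edges G'" using e'(1) by simp
    have pq: "ends G' e' = {p, q}" using stable_graph_ends_eq[OF stable' e'E p(1) q(1)] p q False by blast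
    have "p \<in> verts G'" "q \<in> verts G'" using stable_graph_ends_subset[OF stable' e'E] p(1) q(1) by auto
    then have pre: "p \<in> preimage T" "q \<in> preimage T" "p \<in> fiber G' f y" "q \<in> fiber G' f z"
      using p(2) q(2) yz unfolding preimage_def fiber_def by auto
    then have "(p, q) \<in> adj G' (preimage T) (inner_edges G' (preimage T))"
      using pq e'E unfolding adj_iff inner_edges_def by auto
    moreover have "(q, u') \<in> (adj G' (preimage T) (inner_edges G' (preimage T)))\<^sup>*"
    proof -
      have "fiber G' f z \<subseteq> preimage T" using yz(2) unfolding preimage_eq_UN_fiber by blast
      moreover have "z \<in> verts G" using yz(2) T by blast
      ultimately show ?thesis
        using fiber_connected step.prems pre(4) fiber_edges_subset_inner rtrancl_adj_mono
        unfolding connected_sub_def by meson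
    qed
    ultimately show ?thesis using step.IH[OF pre(3)] by (meson rtrancl_into_rtrancl rtrancl_trans)
  qed
qed

lemma rtrancl_adj_preimage_project:
  assumes "(u, u') \<in> (adj G' (preimage T) (inner_edges G' (preimage T)))\<^sup>*"
  shows "(f u, f u') \<in> (adj G T (inner_edges G T))\<^sup>*"
  using assms
proof (induction rule: rtrancl_induct)
  case (step y z)
  obtain e where e: "e \<in> inner_edges G' (preimage T)" "ends G' e = {y, z}"
    and yz: "f y \<in> T" "f z \<in> T"
    using step(2) unfolding adj_iff preimage_def by blast
  show ?case
  proof (cases "e \<in> S")
    case True
    then have "f y = f z" using contracted_edge_in_fiber[of e y] e(2) unfolding fiber_def by auto
    then show ?thesis using step.IH by simp
  next
    case False
    then have e': "e \<in> edges G' - S" using e(1) unfolding inner_edges_def by simp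
    then have "h e \<in> edges G" "ends G (h e) = {f y, f z}"
      using bij_betwE[OF bij_edges] ends_image e(2) by auto
    then have "(f y, f z) \<in> adj G T (inner_edges G T)"
      using yz unfolding adj_iff inner_edges_def by auto
    then show ?thesis using step.IH by (rule rtrancl_into_rtrancl[rotated])
  qed
qed simp

lemma connected_preimage_iff:
  assumes T: "T \<subseteq> verts G"
  shows "connected_sub G' (preimage T) (inner_edges G' (preimage T)) \<longleftrightarrow> connected_sub G T (inner_edges G T)"
proof
  assume conn: "connected_sub G' (preimage T) (inner_edges G' (preimage T))"
  show "connected_sub G T (inner_edges G T)" unfolding connected_sub_def
  proof (intro ballI)
    fix x y assume "x \<in> T" "y \<in> T"
    then obtain u u' where "u \<in> fiber G' f x" "u' \<in> fiber G' f y"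
      using fiber_nonempty T by (metis ex_in_conv subsetD)
    then have "u \<in> preimage T" "u' \<in> preimage T" "f u = x" "f u' = y"
      using \<open>x \<in> T\<close> \<open>y \<in> T\<close> unfolding preimage_def fiber_def by auto
    then show "(x, y) \<in> (adj G T (inner_edges G T))\<^sup>*"
      using conn rtrancl_adj_preimage_project unfolding connected_sub_def by blast
  qed
next
  assume conn: "connected_sub G T (inner_edges G T)"
  show "connected_sub G' (preimage T) (inner_edges G' (preimage T))" unfolding connected_sub_def
  proof (intro ballI)
    fix u u' assume "u \<in> preimage T" "u' \<in> preimage T"
    then show "(u, u') \<in> (adj G' (preimage T) (inner_edges G' (preimage T)))\<^sup>*"
      using rtrancl_adj_preimage_lift[OF T] conn
      unfolding connected_sub_def preimage_def fiber_def by auto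
  qed
qed

lemma rational_tail_preimage_iff:
  assumes "T \<subseteq> verts G"
  shows "rational_tail G' (preimage T) \<longleftrightarrow> rational_tail G T"
  unfolding rational_tail_iff
  using assms connected_preimage_iff sub_genus_preimage card_cut_edges_preimage preimage_nonempty_iff
  by (auto simp: preimage_def)

section \<open>Z_K satisfies the contraction axiom\<close>

lemma Z_of_fiber_subset:
  assumes "v \<in> Z_of g n K G"
  shows "fiber G' f v \<subseteq> Z_of g n K G'"
proof -
  obtain T where T: "rational_tail G T" "marks n G T \<in> K" "v \<in> T"
    using assms Z_of_stable[OF stable] unfolding K_tails_def by blast
  then have "preimage T \<in> K_tails n K G'"
    using rational_tail_preimage_iff marks_preimage rational_tail_subset unfolding K_tails_def by auto
  moreover have "fiber G' f v \<subseteq> preimage T" using T(3) unfolding preimage_eq_UN_fiber by blast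
  ultimately show ?thesis using Z_of_stable[OF stable'] by blast
qed

definition saturated :: "nat set \<Rightarrow> bool" where
  "saturated C \<longleftrightarrow> (\<forall>u\<in>C. fiber G' f (f u) \<subseteq> C)"

lemma saturated_K_tail_in_Z:
  assumes v: "v \<in> verts G" and C: "rational_tail G' C" "marks n G' C \<in> K" "fiber G' f v \<subseteq> C"
    and sat: "saturated C"
  shows "v \<in> Z_of g n K G"
proof -
  have CV: "C \<subseteq> verts G'" using C(1) by (rule rational_tail_subset)
  have pre: "preimage (f ` C) = C" using sat CV unfolding saturated_def preimage_def fiber_def by auto
  have "f ` C \<subseteq> verts G" using CV map_vertex by blast
  then have "rational_tail G (f ` C)" using rational_tail_preimage_iff pre C(1) by metis
  moreover have "marks n G (f ` C) \<in> K" using marks_preimage[of "f ` C"] pre C(2) by simp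
  ultimately have "f ` C \<in> K_tails n K G" unfolding K_tails_def by simp
  moreover have "v \<in> f ` C" using fiber_nonempty[OF v] C(3) unfolding fiber_def by blast
  ultimately show ?thesis using Z_of_stable[OF stable] by blast
qed

lemma fiber_in_maximal_K_tail:
  assumes K: "admissible_complex g n K" and v: "v \<in> verts G" and Z: "fiber G' f v \<subseteq> Z_of g n K G'"
  obtains M where "maximal_K_tail n K G' M" "fiber G' f v \<subseteq> M"
proof -
  obtain u0 where u0: "u0 \<in> fiber G' f v" using fiber_nonempty[OF v] by blast
  then obtain M where M: "maximal_K_tail n K G' M" "u0 \<in> M"
    using Z Z_of_eq_Union_maximal[OF stable'] by blast
  have "fiber G' f v \<subseteq> M"
  proof
    fix y assume y: "y \<in> fiber G' f v"
    show "y \<in> M"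
    proof (rule ccontr)
      assume "y \<notin> M"
      then obtain e p q where e: "e \<in> fiber_edges v" "ends G' e = {p, q}" "p \<in> M" "q \<in> fiber G' f v" "q \<notin> M"
        using connected_sub_crossing_edge[OF fiber_connected[OF v] u0 M(2) y] by blast
      obtain M' where M': "maximal_K_tail n K G' M'" "q \<in> M'"
        using e(4) Z Z_of_eq_Union_maximal[OF stable'] by blast
      have "e \<in> edges_between G' M M'"
        using e M'(2) contracted_subset unfolding edges_between_def by blast
      then show False using maximal_K_tails_apart[OF stable' K M(1) M'(1)] e(5) M'(2) by blast
    qed
  qed
  then show ?thesis using M(1) that by blast
qed

text \<open>A fiber is connected through contracted edges, so it can only straddle a tail M if the
  cut edge of M is one of them.\<close>
lemma fiber_subset_tail:
  assumes c: "cut_edges G' M = {e0}" and x: "x \<in> verts G" and u: "u \<in> fiber G' f x" "u \<in> M"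
    and not_inside: "\<not> (e0 \<in> S \<and> ends G' e0 \<subseteq> fiber G' f x)"
  shows "fiber G' f x \<subseteq> M"
proof
  fix u' assume u': "u' \<in> fiber G' f x"
  show "u' \<in> M"
  proof (rule ccontr)
    assume "u' \<notin> M"
    then obtain e p q where "e \<in> fiber_edges x" "ends G' e = {p, q}" "p \<in> M" "q \<notin> M"
      using connected_sub_crossing_edge[OF fiber_connected[OF x] u(1) u(2) u'] by blast
    moreover from this have "e = e0"
      using cut_edges_singletonD[OF c] contracted_subset by blast
    ultimately show False using not_inside by blast
  qed
qed

lemma Z_of_uncontracted_cut:
  assumes v: "v \<in> verts G" and M: "rational_tail G' M" "marks n G' M \<in> K" "fiber G' f v \<subseteq> M"
    and c: "cut_edges G' M = {e0}" and "e0 \<notin> S"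
  shows "v \<in> Z_of g n K G"
proof (rule saturated_K_tail_in_Z[OF v M])
  show "saturated M" unfolding saturated_def
  proof
    fix u assume "u \<in> M"
    moreover from this have "u \<in> verts G'" using rational_tail_subset[OF M(1)] by blast
    ultimately show "fiber G' f (f u) \<subseteq> M"
      using fiber_subset_tail[OF c map_vertex] \<open>e0 \<notin> S\<close> unfolding fiber_def by blast
  qed
qed

lemma connected_fiber_part_of_tail:
  assumes c: "cut_edges G' M = {e0}" "ends G' e0 = {a, b}" "b \<notin> M"
    and w: "w \<in> verts G" and a: "a \<in> fiber G' f w \<inter> M"
  shows "connected_sub G' (fiber G' f w \<inter> M) (inner_edges G' (fiber G' f w \<inter> M))"
proof -
  let ?X = "fiber G' f w \<inter> M"
  have "\<forall>e\<in>fiber_edges w. \<forall>p q. ends G' e = {p, q} \<and> p \<in> ?X \<and> q \<in> fiber G' f w - ?X \<longrightarrow> p = a"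
  proof (intro ballI allI impI)
    fix e p q assume e: "e \<in> fiber_edges w" and pq: "ends G' e = {p, q} \<and> p \<in> ?X \<and> q \<in> fiber G' f w - ?X"
    then have "e = e0" using cut_edges_singletonD[OF c(1)] contracted_subset by blast
    then show "p = a" using pq c(2,3) by (metis Int_iff doubleton_eq_iff)
  qed
  then have "connected_sub G' ?X {e\<in>fiber_edges w. ends G' e \<subseteq> ?X}"
    using connected_sub_single_exit[OF fiber_connected[OF w] _ a] by blast
  then show ?thesis
    by (rule connected_sub_mono) (use contracted_subset in \<open>auto simp: inner_edges_def\<close>)
qed

lemma saturated_vertex_component:
  assumes M: "M \<subseteq> verts G'" and c: "cut_edges G' M = {e0}"
    and e0: "a \<in> ends G' e0" "ends G' e0 \<subseteq> fiber G' f w"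
  shows "saturated (vertex_component G' (M - fiber G' f w) u)"
  unfolding saturated_def
proof
  let ?C = "vertex_component G' (M - fiber G' f w) u"
  fix x assume x: "x \<in> ?C"
  then have "x \<in> M" "x \<notin> fiber G' f w" using vertex_component_subset by blast+
  then have xV: "x \<in> verts G'" and "f x \<noteq> w" using M unfolding fiber_def by auto
  have x_fiber: "x \<in> fiber G' f (f x)" using xV unfolding fiber_def by simp
  have "f a = w" using e0 unfolding fiber_def by auto
  then have "a \<notin> fiber G' f (f x)" using \<open>f x \<noteq> w\<close> unfolding fiber_def by auto
  then have "\<not> ends G' e0 \<subseteq> fiber G' f (f x)" using e0(1) by blast
  then have "fiber G' f (f x) \<subseteq> M"
    using fiber_subset_tail[OF c map_vertex[OF xV] x_fiber \<open>x \<in> M\<close>] by blast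
  then have sub: "fiber G' f (f x) \<subseteq> M - fiber G' f w"
    using \<open>f x \<noteq> w\<close> unfolding fiber_def by auto
  show "fiber G' f (f x) \<subseteq> ?C"
    using connected_sub_subset_vertex_component[OF fiber_connected[OF map_vertex[OF xV]] sub
        fiber_edges_subset_inner[OF sub] x_fiber x] .
qed

text \<open>If the cut edge of M is contracted to the vertex w, the part of M over w is connected and
  contains the attaching vertex; the component of the rest of M containing the fiber of v is
  then a saturated rational tail.\<close>
lemma Z_of_contracted_cut:
  assumes K: "admissible_complex g n K" and v: "v \<in> verts G"
    and M: "rational_tail G' M" "marks n G' M \<in> K" "fiber G' f v \<subseteq> M"
    and c: "cut_edges G' M = {e0}" "ends G' e0 = {a, b}" "a \<in> M" "b \<notin> M"
    and contracted: "e0 \<in> S"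
  shows "v \<in> Z_of g n K G"
proof -
  define w where "w = f a"
  have MV: "M \<subseteq> verts G'" using M(1) by (rule rational_tail_subset)
  have wV: "w \<in> verts G" using map_vertex c(3) MV unfolding w_def by blast
  have e0_w: "ends G' e0 \<subseteq> fiber G' f w"
    using contracted_edge_in_fiber[OF contracted] c(2) unfolding w_def by simp
  then have a: "a \<in> fiber G' f w \<inter> M" using c(2,3) by blast
  have "v \<noteq> w" using e0_w M(3) c(2,4) by blast
  then have fiber_v: "fiber G' f v \<subseteq> M - fiber G' f w" using M(3) unfolding fiber_def by blast
  obtain u0 where u0: "u0 \<in> fiber G' f v" using fiber_nonempty[OF v] by blast
  define C where "C = vertex_component G' (M - fiber G' f w) u0"
  have "M - fiber G' f w = M - (fiber G' f w \<inter> M)" by blast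
  then have "rational_tail G' C"
    using rational_tail_component[OF stable' M(1) c(1,2,4) _ a connected_fiber_part_of_tail[OF c(1,2,4) wV a]]
      fiber_v u0 unfolding C_def by auto
  moreover have "marks n G' C \<subseteq> marks n G' M"
    using vertex_component_subset unfolding C_def by (intro marks_mono) blast
  then have "marks n G' C \<in> K"
    using K M(2) simplicial_complex_subset_closed unfolding admissible_complex_def by blast
  moreover have "fiber G' f v \<subseteq> C"
    using connected_sub_subset_vertex_component[OF fiber_connected[OF v] fiber_v
        fiber_edges_subset_inner[OF fiber_v] u0] vertex_component_self fiber_v u0
    unfolding C_def by blast
  moreover have "saturated C"
    using saturated_vertex_component[OF MV c(1) _ e0_w] c(2) unfolding C_def by blast
  ultimately show ?thesis using saturated_K_tail_in_Z[OF v] by blast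
qed

lemma Z_of_contraction:
  assumes K: "admissible_complex g n K" and v: "v \<in> verts G"
  shows "v \<in> Z_of g n K G \<longleftrightarrow> fiber G' f v \<subseteq> Z_of g n K G'"
proof
  assume "fiber G' f v \<subseteq> Z_of g n K G'"
  then obtain M where M: "maximal_K_tail n K G' M" "fiber G' f v \<subseteq> M"
    using fiber_in_maximal_K_tail[OF K v] by blast
  then have tail: "rational_tail G' M" "marks n G' M \<in> K" using maximal_K_tailD by blast+
  obtain e0 a b where "cut_edges G' M = {e0}" "ends G' e0 = {a, b}" "a \<in> M" "b \<notin> M"
    using rational_tail_cut_edge[OF stable' tail(1)] by metis
  then show "v \<in> Z_of g n K G"
    using Z_of_contracted_cut[OF K v tail M(2)] Z_of_uncontracted_cut[OF v tail M(2)] by blast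
qed (rule Z_of_fiber_subset)

end

lemma Z_of_extremal:
  assumes K: "admissible_complex g n K"
  shows "extremal_assignment g n (Z_of g n K)"
  unfolding extremal_assignment_def
proof (intro conjI allI impI)
  fix G assume st: "stable_graph g n G"
  show "Z_of g n K G \<subseteq> verts G" using Z_of_stable[OF st] rational_tail_subset unfolding K_tails_def by blast
  show "Z_of g n K G \<noteq> verts G" using Z_of_proper[OF st K] .
next
  fix G' G S f h
  assume "stable_graph g n G' \<and> stable_graph g n G \<and> contraction n G' G S f h"
  then interpret stable_contraction g n G' G S f h by unfold_locales auto
  show "\<forall>v\<in>verts G. v \<in> Z_of g n K G \<longleftrightarrow> fiber G' f v \<subseteq> Z_of g n K G'"
    using Z_of_contraction[OF K] by blast
qed (simp add: Z_of_def)

section \<open>Recovering the complex from an extremal assignment\<close>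

definition one_edge_graph :: "nat \<Rightarrow> nat set \<Rightarrow> sgraph" where
  "one_edge_graph g A = \<lparr>verts = {0, 1}, edges = {0}, ends = (\<lambda>e. {0, 1}),
     gen = (\<lambda>v. if v = 0 then 0 else g), leg = (\<lambda>i. if i \<in> A then 0 else 1)\<rparr>"

lemma one_edge_graph_simps:
  "verts (one_edge_graph g A) = {0, 1}" "edges (one_edge_graph g A) = {0}"
  "ends (one_edge_graph g A) e = {0, 1}" "gen (one_edge_graph g A) v = (if v = 0 then 0 else g)"
  "leg (one_edge_graph g A) i = (if i \<in> A then 0 else 1)"
  unfolding one_edge_graph_def by simp_all

lemma stable_one_edge_graph_iff:
  assumes A: "A \<subseteq> {1..n}"
  shows "stable_graph g n (one_edge_graph g A) \<longleftrightarrow> card A \<ge> 2 \<and> (g \<ge> 1 \<or> card ({1..n} - A) \<ge> 2)"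
proof -
  have "{i\<in>{1..n}. leg (one_edge_graph g A) i = 0} = A"
    "{i\<in>{1..n}. leg (one_edge_graph g A) i = 1} = {1..n} - A"
    using A unfolding one_edge_graph_simps by auto
  then have "valence n (one_edge_graph g A) 0 = 1 + card A"
    "valence n (one_edge_graph g A) 1 = 1 + card ({1..n} - A)"
    unfolding valence_def by (simp_all add: one_edge_graph_simps)
  moreover have "connected_sub (one_edge_graph g A) {0, 1} {0}"
    by (rule connected_sub_edge) (simp_all add: one_edge_graph_simps)
  ultimately show ?thesis
    unfolding stable_graph_def sub_genus_def by (auto simp: one_edge_graph_simps)
qed

lemma rational_tail_one_edge_graph: "rational_tail (one_edge_graph g A) {0}"
proof -
  have "inner_edges (one_edge_graph g A) {0} = {}" "cut_edges (one_edge_graph g A) {0} = {0}"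
    unfolding inner_edges_def cut_edges_def by (auto simp: one_edge_graph_simps)
  then show ?thesis
    unfolding rational_tail_iff sub_genus_def
    by (simp add: one_edge_graph_simps connected_sub_singleton)
qed

lemma marks_one_edge_graph:
  "A \<subseteq> {1..n} \<Longrightarrow> marks n (one_edge_graph g A) {0} = A"
  "marks n (one_edge_graph g A) {1} = {1..n} - A"
  unfolding marks_def one_edge_graph_simps by auto

lemma Z_of_one_edge_graph:
  assumes st: "stable_graph g n (one_edge_graph g A)" and A: "A \<subseteq> {1..n}"
  shows "0 \<in> Z_of g n K (one_edge_graph g A) \<longleftrightarrow> A \<in> K"
proof -
  have "T = {0}" if T: "rational_tail (one_edge_graph g A) T" "0 \<in> T" for T
  proof -
    have "T \<subseteq> {0, 1}" using rational_tail_subset[OF T(1)] by (simp add: one_edge_graph_simps)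
    moreover have "T \<noteq> {0, 1}"
    proof
      assume "T = {0, 1}"
      then have "cut_edges (one_edge_graph g A) T = {}"
        unfolding cut_edges_def by (simp add: one_edge_graph_simps)
      then show False using T(1) unfolding rational_tail_iff by simp
    qed
    ultimately show "T = {0}" using T(2) by blast
  qed
  moreover have "{0} \<in> K_tails n K (one_edge_graph g A) \<longleftrightarrow> A \<in> K"
    using rational_tail_one_edge_graph marks_one_edge_graph(1)[OF A] unfolding K_tails_def by simp
  ultimately show ?thesis
    using Z_of_stable[OF st] unfolding K_tails_def by blast
qed

lemma contraction_onto_one_edge_graph:
  assumes st: "stable_graph g n G" and T: "rational_tail G T"
    and c: "cut_edges G T = {e0}" "e0 \<in> edges G" "ends G e0 = {a, b}" "a \<in> T" "b \<in> verts G" "b \<notin> T"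
  defines "f \<equiv> \<lambda>u. if u \<in> T then 0 else 1::nat"
  shows "contraction n G (one_edge_graph g (marks n G T)) (edges G - {e0}) f (\<lambda>_. 0)"
    and "fiber G f 0 = T"
proof -
  have TV: "T \<subseteq> verts G" using T by (rule rational_tail_subset)
  show fiber0: "fiber G f 0 = T" unfolding fiber_def f_def using TV by auto
  have fiber1: "fiber G f 1 = verts G - T" unfolding fiber_def f_def by auto
  have inner0: "{e\<in>edges G - {e0}. ends G e \<subseteq> T} = inner_edges G T"
    and inner1: "{e\<in>edges G - {e0}. ends G e \<subseteq> verts G - T} = inner_edges G (verts G - T)"
    unfolding inner_edges_def using c(3,4,6) by auto
  show "contraction n G (one_edge_graph g (marks n G T)) (edges G - {e0}) f (\<lambda>_. 0)"
    unfolding contraction_def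
  proof (intro conjI ballI)
    have "f a = 0" "f b = 1" using c(4,6) unfolding f_def by auto
    then show "f ` verts G = verts (one_edge_graph g (marks n G T))"
      using TV c(4,5) unfolding one_edge_graph_simps f_def by (auto simp: image_iff)
    have "edges G - (edges G - {e0}) = {e0}" using c(2) by blast
    then show "bij_betw (\<lambda>_. 0) (edges G - (edges G - {e0})) (edges (one_edge_graph g (marks n G T)))"
      by (simp add: one_edge_graph_simps bij_betw_def)
  next
    fix e assume "e \<in> edges G - (edges G - {e0})"
    then show "ends (one_edge_graph g (marks n G T)) 0 = f ` ends G e"
      using c(3,4,6) unfolding f_def by (auto simp: one_edge_graph_simps)
  next
    fix e assume e: "e \<in> edges G - {e0}"
    then have "ends G e \<subseteq> T \<or> ends G e \<inter> T = {}" using cut_edges_singletonD[OF c(1)] by blast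
    then have "f ` ends G e = (\<lambda>_. 0) ` ends G e \<or> f ` ends G e = (\<lambda>_. 1) ` ends G e"
      unfolding f_def by (auto intro: image_cong)
    then show "card (f ` ends G e) = 1"
      using stable_graph_ends_nonempty[OF st] e by (auto simp: image_constant_conv)
  next
    fix i assume "i \<in> {1..n}"
    then show "leg (one_edge_graph g (marks n G T)) i = f (leg G i)"
      unfolding one_edge_graph_simps marks_def f_def by simp
  next
    fix v assume "v \<in> verts (one_edge_graph g (marks n G T))"
    then consider "v = 0" | "v = 1" by (auto simp: one_edge_graph_simps)
    then show "connected_sub G (fiber G f v) {e\<in>edges G - {e0}. ends G e \<subseteq> fiber G f v}"
      by cases (simp_all only: fiber0 fiber1 inner0 inner1 rational_tail_connected[OF T]
          rational_tail_complement_connected[OF st T])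
  next
    fix v assume "v \<in> verts (one_edge_graph g (marks n G T))"
    then consider "v = 0" | "v = 1" by (auto simp: one_edge_graph_simps)
    then show "int (gen (one_edge_graph g (marks n G T)) v)
        = sub_genus G (fiber G f v) {e\<in>edges G - {e0}. ends G e \<subseteq> fiber G f v}"
      by cases (simp_all only: fiber0 fiber1 inner0 inner1 rational_tail_genus[OF T]
          rational_tail_complement_genus[OF st T] one_edge_graph_simps, simp_all)
  qed blast
qed

lemma stable_one_edge_graph_of_tail:
  assumes st: "stable_graph g n G" and T: "rational_tail G T"
  shows "stable_graph g n (one_edge_graph g (marks n G T))"
proof -
  have "g \<ge> 1 \<or> card ({1..n} - marks n G T) \<ge> 2"
  proof (cases "g = 0")
    case True
    then have "rational_tail G (verts G - T)" using rational_tail_complement st T by simp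
    then have "card (marks n G (verts G - T)) \<ge> 2" by (rule rational_tail_card_marks[OF st])
    then show ?thesis using marks_complement[OF st] by simp
  qed simp
  then show ?thesis
    using stable_one_edge_graph_iff[OF marks_subset] rational_tail_card_marks[OF st T] by simp
qed

lemma extremal_assignment_proper:
  assumes "extremal_assignment g n Z" "stable_graph g n G"
  shows "Z G \<subseteq> verts G" "Z G \<noteq> verts G"
  using assms unfolding extremal_assignment_def by blast+

lemma extremal_assignment_contraction:
  assumes "extremal_assignment g n Z" "stable_graph g n G'" "stable_graph g n G"
    "contraction n G' G S f h" "v \<in> verts G"
  shows "v \<in> Z G \<longleftrightarrow> fiber G' f v \<subseteq> Z G'"
  using assms unfolding extremal_assignment_def by blast

lemma extremal_tail_subset_iff:
  assumes Z: "extremal_assignment g n Z" and st: "stable_graph g n G" and T: "rational_tail G T"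
  shows "T \<subseteq> Z G \<longleftrightarrow> 0 \<in> Z (one_edge_graph g (marks n G T))"
proof -
  obtain e0 a b where c: "cut_edges G T = {e0}" "e0 \<in> edges G" "ends G e0 = {a, b}" "a \<in> T"
    "b \<in> verts G" "b \<notin> T"
    using rational_tail_cut_edge[OF st T] by metis
  show ?thesis
    using extremal_assignment_contraction[OF Z st stable_one_edge_graph_of_tail[OF st T]
        contraction_onto_one_edge_graph(1)[OF st T c]]
      contraction_onto_one_edge_graph(2)[OF st T c]
    by (simp add: one_edge_graph_simps)
qed

text \<open>Sets with fewer than two elements are faces of every simplicial complex; they are not
  the marks of any rational tail.\<close>
definition complex_of :: "nat \<Rightarrow> nat \<Rightarrow> (sgraph \<Rightarrow> nat set) \<Rightarrow> nat set set" where
  "complex_of g n Z = {A. A \<subseteq> {1..n} \<and> (card A \<le> 1 \<or> 0 \<in> Z (one_edge_graph g A))}"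

lemma extremal_tail_subset_iff_marks:
  assumes "extremal_assignment g n Z" "stable_graph g n G" "rational_tail G T"
  shows "T \<subseteq> Z G \<longleftrightarrow> marks n G T \<in> complex_of g n Z"
proof -
  have "\<not> card (marks n G T) \<le> 1" using rational_tail_card_marks[OF assms(2,3)] by simp
  then show ?thesis
    using extremal_tail_subset_iff[OF assms] marks_subset[of n G T] unfolding complex_of_def by simp
qed

lemma Z_of_complex_of:
  assumes Z: "extremal_assignment g n Z" and S: "supported_on_rational_tails g n Z"
  shows "Z_of g n (complex_of g n Z) = Z"
proof
  fix G
  show "Z_of g n (complex_of g n Z) G = Z G"
  proof (cases "stable_graph g n G")
    case False
    moreover have "Z G = {}" using Z False unfolding extremal_assignment_def by blast
    ultimately show ?thesis unfolding Z_of_def by simp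
  next
    case st: True
    obtain \<T> where \<T>: "\<forall>T\<in>\<T>. rational_tail G T" "\<Union>\<T> = Z G"
      using S st unfolding supported_on_rational_tails_def by meson
    have "\<Union>(K_tails n (complex_of g n Z) G) = Z G"
      using \<T> extremal_tail_subset_iff_marks[OF Z st] unfolding K_tails_def by blast
    then show ?thesis using Z_of_stable[OF st] by simp
  qed
qed

definition chain_graph :: "nat \<Rightarrow> nat set \<Rightarrow> nat set \<Rightarrow> sgraph" where
  "chain_graph g A B = \<lparr>verts = {0, 1, 2}, edges = {0, 1}, ends = (\<lambda>e. if e = 0 then {0, 1} else {1, 2}),
     gen = (\<lambda>v. if v = 2 then g else 0), leg = (\<lambda>i. if i \<in> B then 0 else if i \<in> A then 1 else 2)\<rparr>"

lemma chain_graph_simps: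
  "verts (chain_graph g A B) = {0, 1, 2}" "edges (chain_graph g A B) = {0, 1}"
  "ends (chain_graph g A B) e = (if e = 0 then {0, 1} else {1, 2})"
  "gen (chain_graph g A B) v = (if v = 2 then g else 0)"
  "leg (chain_graph g A B) i = (if i \<in> B then 0 else if i \<in> A then 1 else 2)"
  unfolding chain_graph_def by simp_all

lemma stable_chain_graph:
  assumes BA: "B \<subseteq> A" and A: "A \<subseteq> {1..n}" and B: "card B \<ge> 2" and "A \<noteq> B"
    and rest: "g \<ge> 1 \<or> card ({1..n} - A) \<ge> 2"
  shows "stable_graph g n (chain_graph g A B)"
proof -
  have "{i\<in>{1..n}. leg (chain_graph g A B) i = 0} = B"
    "{i\<in>{1..n}. leg (chain_graph g A B) i = 1} = A - B"
    "{i\<in>{1..n}. leg (chain_graph g A B) i = 2} = {1..n} - A"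
    using BA A unfolding chain_graph_simps by auto
  then have "valence n (chain_graph g A B) 0 = 1 + card B"
    "valence n (chain_graph g A B) 1 = 2 + card (A - B)"
    "valence n (chain_graph g A B) 2 = 1 + card ({1..n} - A)"
    unfolding valence_def by (simp_all add: chain_graph_simps)
  moreover have "A - B \<noteq> {}" using BA \<open>A \<noteq> B\<close> by blast
  then have "card (A - B) > 0"
    using finite_Diff[OF finite_subset[OF A finite_atLeastAtMost]] by (simp add: card_gt_0_iff)
  moreover have "connected_sub (chain_graph g A B) {0, 1, 2} {0, 1}"
    by (rule connected_sub_path3[of 0 _ _ _ _ 1]) (simp_all add: chain_graph_simps)
  ultimately show ?thesis
    using B rest unfolding stable_graph_def sub_genus_def by (auto simp: chain_graph_simps)
qed

lemma rational_tails_chain_graph: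
  "rational_tail (chain_graph g A B) {0}" "rational_tail (chain_graph g A B) {0, 1}"
proof -
  have "inner_edges (chain_graph g A B) {0} = {}" "cut_edges (chain_graph g A B) {0} = {0}"
    "inner_edges (chain_graph g A B) {0, 1} = {0}" "cut_edges (chain_graph g A B) {0, 1} = {1}"
    unfolding inner_edges_def cut_edges_def by (auto simp: chain_graph_simps)
  moreover have "connected_sub (chain_graph g A B) {0, 1} {0}"
    by (rule connected_sub_edge[of 0]) (simp_all add: chain_graph_simps)
  ultimately show "rational_tail (chain_graph g A B) {0}" "rational_tail (chain_graph g A B) {0, 1}"
    unfolding rational_tail_iff sub_genus_def by (simp_all add: chain_graph_simps connected_sub_singleton)
qed

lemma marks_chain_graph:
  "B \<subseteq> A \<Longrightarrow> A \<subseteq> {1..n} \<Longrightarrow> marks n (chain_graph g A B) {0} = B"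
  "B \<subseteq> A \<Longrightarrow> A \<subseteq> {1..n} \<Longrightarrow> marks n (chain_graph g A B) {0, 1} = A"
  unfolding marks_def chain_graph_simps by auto

lemma complex_of_large_face:
  assumes Z: "extremal_assignment g n Z" and A: "A \<in> complex_of g n Z" "card A \<ge> 2"
  shows "A \<subseteq> {1..n}" "stable_graph g n (one_edge_graph g A)" "0 \<in> Z (one_edge_graph g A)"
proof -
  show An: "A \<subseteq> {1..n}" and Z0: "0 \<in> Z (one_edge_graph g A)"
    using A unfolding complex_of_def by auto
  show "stable_graph g n (one_edge_graph g A)"
    using Z0 Z unfolding extremal_assignment_def by blast
qed

lemma simplicial_complex_of:
  assumes Z: "extremal_assignment g n Z"
  shows "simplicial_complex n (complex_of g n Z)"
  unfolding simplicial_complex_def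
proof (intro conjI ballI allI impI)
  show "complex_of g n Z \<subseteq> Pow {1..n}" unfolding complex_of_def by blast
  show "{i} \<in> complex_of g n Z" if "i \<in> {1..n}" for i using that unfolding complex_of_def by simp
next
  fix A B assume A: "A \<in> complex_of g n Z" and BA: "B \<subseteq> A"
  have An: "A \<subseteq> {1..n}" using A unfolding complex_of_def by simp
  show "B \<in> complex_of g n Z"
  proof (cases "card B \<le> 1 \<or> B = A")
    case True
    then show ?thesis using A An BA unfolding complex_of_def by auto
  next
    case False
    then have B2: "card B \<ge> 2" and "A \<noteq> B" by auto
    then have "card A \<ge> 2" using card_mono[OF finite_subset[OF An] BA] by simp
    then have "stable_graph g n (one_edge_graph g A)" and A_in: "0 \<in> Z (one_edge_graph g A)"
      using complex_of_large_face[OF Z A] by auto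
    then have "stable_graph g n (chain_graph g A B)"
      using stable_chain_graph[OF BA An B2 \<open>A \<noteq> B\<close>] stable_one_edge_graph_iff[OF An] by blast
    then have "{0, 1} \<subseteq> Z (chain_graph g A B) \<longleftrightarrow> A \<in> complex_of g n Z"
      "{0} \<subseteq> Z (chain_graph g A B) \<longleftrightarrow> B \<in> complex_of g n Z"
      using extremal_tail_subset_iff_marks[OF Z] rational_tails_chain_graph
        marks_chain_graph[OF BA An] by metis+
    then show ?thesis using A by blast
  qed
qed

text \<open>In genus 0 both vertices of a one-edge graph are rational tails, so two complementary
  faces would force an extremal assignment to contain the whole graph.\<close>
lemma complex_of_no_complementary_faces:
  assumes Z: "extremal_assignment 0 n Z" and A: "A \<in> complex_of 0 n Z" "card A \<ge> 2"
  shows "{1..n} - A \<notin> complex_of 0 n Z"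
proof
  assume compl: "{1..n} - A \<in> complex_of 0 n Z"
  have An: "A \<subseteq> {1..n}" and st: "stable_graph 0 n (one_edge_graph 0 A)"
    and Z0: "0 \<in> Z (one_edge_graph 0 A)"
    using complex_of_large_face[OF Z A] by auto
  have "rational_tail (one_edge_graph 0 A) {1}"
    using rational_tail_complement[OF st rational_tail_one_edge_graph]
    by (simp add: one_edge_graph_simps insert_Diff_if)
  then have "{1} \<subseteq> Z (one_edge_graph 0 A)"
    using extremal_tail_subset_iff_marks[OF Z st] compl marks_one_edge_graph(2) by metis
  moreover have "Z (one_edge_graph 0 A) \<subseteq> {0, 1}"
    using extremal_assignment_proper(1)[OF Z st] by (simp add: one_edge_graph_simps)
  ultimately have "Z (one_edge_graph 0 A) = verts (one_edge_graph 0 A)"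
    using Z0 by (auto simp: one_edge_graph_simps)
  then show False using extremal_assignment_proper(2)[OF Z st] by blast
qed

lemma at_least_triparted_complex_of:
  assumes Z: "extremal_assignment 0 n Z" and n: "n \<ge> 3"
  shows "at_least_triparted n (complex_of 0 n Z)"
proof (subst at_least_triparted_iff)
  show "complex_of 0 n Z \<subseteq> Pow {1..n}" "{} \<in> complex_of 0 n Z" unfolding complex_of_def by auto
  show "\<forall>A\<in>complex_of 0 n Z. \<forall>B\<in>complex_of 0 n Z. A \<union> B = {1..n} \<longrightarrow> A \<inter> B \<noteq> {}"
  proof (intro ballI impI notI)
    fix A B assume faces: "A \<in> complex_of 0 n Z" "B \<in> complex_of 0 n Z"
      and cover: "A \<union> B = {1..n}" and disjoint: "A \<inter> B = {}"
    then have "B = {1..n} - A" "A = {1..n} - B" by blast+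
    moreover have "card A + card B = n"
      using card_Un_disjoint[of A B] cover disjoint finite_atLeastAtMost
      by (metis card_atLeastAtMost diff_Suc_1 finite_Un)
    then have "card A \<ge> 2 \<or> card B \<ge> 2" using n by linarith
    ultimately show False
      using complex_of_no_complementary_faces[OF Z] faces by metis
  qed
qed

lemma complex_of_Z_of:
  assumes K: "admissible_complex g n K" and n: "n \<ge> 1"
  shows "complex_of g n (Z_of g n K) = K"
proof (intro equalityI subsetI)
  have sc: "simplicial_complex n K" using K unfolding admissible_complex_def by simp
  fix A assume A: "A \<in> complex_of g n (Z_of g n K)"
  then have An: "A \<subseteq> {1..n}" unfolding complex_of_def by simp
  show "A \<in> K"
  proof (cases "card A \<le> 1")
    case True
    then have "A = {} \<or> (\<exists>i\<in>{1..n}. A = {i})"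
      using An finite_subset[OF An] by (auto simp: le_Suc_eq card_1_singleton_iff)
    moreover have "{1} \<in> K" using sc n unfolding simplicial_complex_def by simp
    ultimately show ?thesis
      using sc simplicial_complex_subset_closed[OF sc, of "{1}" "{}"] unfolding simplicial_complex_def by auto
  next
    case False
    then have "0 \<in> Z_of g n K (one_edge_graph g A)" using A unfolding complex_of_def by simp
    moreover from this have "stable_graph g n (one_edge_graph g A)" unfolding Z_of_def by (simp split: if_splits)
    ultimately show ?thesis using Z_of_one_edge_graph[OF _ An] by blast
  qed
next
  fix A assume A: "A \<in> K"
  have "K \<subseteq> Pow {1..n}" using K unfolding admissible_complex_def simplicial_complex_def by simp
  then have An: "A \<subseteq> {1..n}" using A by blast
  show "A \<in> complex_of g n (Z_of g n K)"
  proof (cases "card A \<le> 1")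
    case False
    have "g \<ge> 1 \<or> card ({1..n} - A) \<ge> 2"
      using K at_least_triparted_card_complement[OF _ _ A] unfolding admissible_complex_def by auto
    then have "stable_graph g n (one_edge_graph g A)"
      using stable_one_edge_graph_iff[OF An] False by simp
    then show ?thesis using Z_of_one_edge_graph[OF _ An] A An unfolding complex_of_def by simp
  qed (use An in \<open>simp add: complex_of_def\<close>)
qed

theorem bij_betw_Z_of:
  assumes "n \<ge> 1" and "g = 0 \<longrightarrow> n \<ge> 3"
  shows "bij_betw (Z_of g n) {K. admissible_complex g n K}
    {Z. extremal_assignment g n Z \<and> supported_on_rational_tails g n Z}"
proof (rule bij_betw_byWitness[where f' = "complex_of g n"])
  show "Z_of g n ` {K. admissible_complex g n K}
      \<subseteq> {Z. extremal_assignment g n Z \<and> supported_on_rational_tails g n Z}"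
    using Z_of_extremal Z_of_supported by blast
  show "complex_of g n ` {Z. extremal_assignment g n Z \<and> supported_on_rational_tails g n Z}
      \<subseteq> {K. admissible_complex g n K}"
    using simplicial_complex_of at_least_triparted_complex_of assms(2)
    unfolding admissible_complex_def by auto
qed (use complex_of_Z_of[OF _ assms(1)] Z_of_complex_of in auto)

theorem lemma4p15:
  shows "(g \<ge> 1 \<and> n \<ge> 1 \<longrightarrow>
            bij_betw (Z_of g n) {K. simplicial_complex n K}
              {Z. extremal_assignment g n Z \<and> supported_on_rational_tails g n Z})
       \<and> (n \<ge> 3 \<longrightarrow>
            bij_betw (Z_of 0 n) {K. simplicial_complex n K \<and> at_least_triparted n K}
              {Z. extremal_assignment 0 n Z \<and> supported_on_rational_tails 0 n Z})"
proof (intro conjI impI)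
  assume "g \<ge> 1 \<and> n \<ge> 1"
  moreover from this have "{K. simplicial_complex n K} = {K. admissible_complex g n K}"
    unfolding admissible_complex_def by auto
  ultimately show "bij_betw (Z_of g n) {K. simplicial_complex n K}
      {Z. extremal_assignment g n Z \<and> supported_on_rational_tails g n Z}"
    using bij_betw_Z_of[of n g] by simp
next
  assume "n \<ge> 3"
  moreover have "{K. simplicial_complex n K \<and> at_least_triparted n K} = {K. admissible_complex 0 n K}"
    unfolding admissible_complex_def by auto
  ultimately show "bij_betw (Z_of 0 n) {K. simplicial_complex n K \<and> at_least_triparted n K}
      {Z. extremal_assignment 0 n Z \<and> supported_on_rational_tails 0 n Z}"
    using bij_betw_Z_of[of n 0] by simp
qed

end
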